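(* Let $\Phi(s),\Phi'(s)$, $s\in[0,t]$, be time-dependent potentials, $\Theta$ a time-independent potential, and $0<\kappa'<\kappa$. Let $\lambda=\max\{\|\Phi\|_\kappa,\|\Phi'\|_\kappa\}$ and suppose $12\lambda t\leq\kappa-\kappa'$. Let $\Delta(s)=\Phi(s)-\Phi'(s)$, $\mathcal{M}=\frac{72}{\kappa'(\kappa-\kappa')}$ and $\mathcal{C}=1+\mathcal{M}\lambda t$ (so $\mathcal{C}\leq1+6/\kappa'$). Then $$\|\mathcal{E}_\Phi(t)\Theta-\mathcal{E}_{\Phi'}(t)\Theta\|_{\kappa'}\leq\mathcal{C}^3\mathcal{M}\,t\,\|\Theta\|_\kappa\|\Delta\|_\kappa.$$
   Context: $\Lambda$ is a finite set of sites, each carrying a finite-dimensional Hilbert space; $\|\cdot\|$ is the operator norm. A potential $Q$ is a family of operators $Q_Z$, $Z\subseteq\Lambda$, with $Q_Z$ supported on $Z$; differences are termwise. Norm: $\|Q\|_\kappa=\sup_{x\in\Lambda}\sum_{Z\ni x}e^{\kappa|Z|}\|Q_Z\|$; for time-dependent potentials on $[0,t]$, $\|\Phi\|_\kappa=\frac1t\int_0^t\|\Phi(s)\|_\kappa ds$. Commutator of potentials: $(\mathrm{ad}_\Phi\Theta)_Z=\sum_{Z_1\cap Z_2\neq\emptyset,Z_1\cup Z_2=Z}[\Phi_{Z_1},\Theta_{Z_2}]$. Dyson-series evolution: $\mathcal{E}_\Phi(t)\Theta=\sum_{n\geq0}i^n\int_0^t dt_1\int_0^{t_1}dt_2\cdots\int_0^{t_{n-1}}dt_n\,\mathrm{ad}_{\Phi(t_1)}\cdots\mathrm{ad}_{\Phi(t_n)}\Theta$.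 *)

theory Defs
  imports "HOL-Analysis.Analysis" "HOL-Library.Function_Algebras"
begin

text \<open>Concrete model: site x in Lambda carries the Hilbert space C^(d x).
  Basis of the total Hilbert space: configurations sigma with sigma x < d x on Lambda
  (and sigma x = 0 off Lambda). Operators are matrices indexed by configurations.\<close>

type_synonym 'a op = "('a \<Rightarrow> nat) \<Rightarrow> ('a \<Rightarrow> nat) \<Rightarrow> complex"
type_synonym 'a pot = "'a set \<Rightarrow> 'a op"

definition confs :: "'a set \<Rightarrow> ('a \<Rightarrow> nat) \<Rightarrow> ('a \<Rightarrow> nat) set" where
  "confs L d = {\<sigma>. (\<forall>x\<in>L. \<sigma> x < d x) \<and> (\<forall>x. x \<notin> L \<longrightarrow> \<sigma> x = 0)}"

definition op_mult :: "'a set \<Rightarrow> ('a \<Rightarrow> nat) \<Rightarrow> 'a op \<Rightarrow> 'a op \<Rightarrow> 'a op" where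
  "op_mult L d A B = (\<lambda>\<sigma> \<tau>. \<Sum>\<rho>\<in>confs L d. A \<sigma> \<rho> * B \<rho> \<tau>)"

definition op_comm :: "'a set \<Rightarrow> ('a \<Rightarrow> nat) \<Rightarrow> 'a op \<Rightarrow> 'a op \<Rightarrow> 'a op" where
  "op_comm L d A B = op_mult L d A B - op_mult L d B A"

definition op_apply :: "'a set \<Rightarrow> ('a \<Rightarrow> nat) \<Rightarrow> 'a op \<Rightarrow> (('a \<Rightarrow> nat) \<Rightarrow> complex)
    \<Rightarrow> (('a \<Rightarrow> nat) \<Rightarrow> complex)" where
  "op_apply L d A v = (\<lambda>\<sigma>. \<Sum>\<tau>\<in>confs L d. A \<sigma> \<tau> * v \<tau>)"

definition vnorm :: "'a set \<Rightarrow> ('a \<Rightarrow> nat) \<Rightarrow> (('a \<Rightarrow> nat) \<Rightarrow> complex) \<Rightarrow> real" where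
  "vnorm L d v = sqrt (\<Sum>\<sigma>\<in>confs L d. (cmod (v \<sigma>))\<^sup>2)"

definition opnorm :: "'a set \<Rightarrow> ('a \<Rightarrow> nat) \<Rightarrow> 'a op \<Rightarrow> real" where
  "opnorm L d A = Sup {vnorm L d (op_apply L d A v) | v. vnorm L d v \<le> 1}"

text \<open>A is supported on Z: A = B \<otimes> Id on the complement of Z.\<close>
definition supported_on :: "'a set \<Rightarrow> ('a \<Rightarrow> nat) \<Rightarrow> 'a op \<Rightarrow> 'a set \<Rightarrow> bool" where
  "supported_on L d A Z \<longleftrightarrow>
     (\<forall>\<sigma>\<in>confs L d. \<forall>\<tau>\<in>confs L d. (\<exists>x\<in>L - Z. \<sigma> x \<noteq> \<tau> x) \<longrightarrow> A \<sigma> \<tau> = 0) \<and>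
     (\<forall>\<sigma>\<in>confs L d. \<forall>\<tau>\<in>confs L d. \<forall>\<sigma>'\<in>confs L d. \<forall>\<tau>'\<in>confs L d.
        (\<forall>x\<in>Z. \<sigma> x = \<sigma>' x \<and> \<tau> x = \<tau>' x) \<and> (\<forall>x\<in>L - Z. \<sigma> x = \<tau> x \<and> \<sigma>' x = \<tau>' x)
        \<longrightarrow> A \<sigma> \<tau> = A \<sigma>' \<tau>')"

definition is_potential :: "'a set \<Rightarrow> ('a \<Rightarrow> nat) \<Rightarrow> 'a pot \<Rightarrow> bool" where
  "is_potential L d Q \<longleftrightarrow> (\<forall>Z. Z \<subseteq> L \<longrightarrow> supported_on L d (Q Z) Z)"

definition pot_norm :: "'a set \<Rightarrow> ('a \<Rightarrow> nat) \<Rightarrow> real \<Rightarrow> 'a pot \<Rightarrow> real" where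
  "pot_norm L d \<kappa> Q = Max (insert 0 ((\<lambda>x. \<Sum>Z\<in>{Z. Z \<subseteq> L \<and> x \<in> Z}.
       exp (\<kappa> * real (card Z)) * opnorm L d (Q Z)) ` L))"

definition tpot_norm :: "'a set \<Rightarrow> ('a \<Rightarrow> nat) \<Rightarrow> real \<Rightarrow> real \<Rightarrow> (real \<Rightarrow> 'a pot) \<Rightarrow> real" where
  "tpot_norm L d \<kappa> t \<Phi> = (1 / t) * integral {0..t} (\<lambda>s. pot_norm L d \<kappa> (\<Phi> s))"

definition pot_ad :: "'a set \<Rightarrow> ('a \<Rightarrow> nat) \<Rightarrow> 'a pot \<Rightarrow> 'a pot \<Rightarrow> 'a pot" where
  "pot_ad L d P Q = (\<lambda>Z. \<Sum>(Z1, Z2)\<in>{(Z1, Z2). Z1 \<union> Z2 = Z \<and> Z1 \<inter> Z2 \<noteq> {}}.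
       op_comm L d (P Z1) (Q Z2))"

primrec dyson_term :: "'a set \<Rightarrow> ('a \<Rightarrow> nat) \<Rightarrow> (real \<Rightarrow> 'a pot) \<Rightarrow> 'a pot \<Rightarrow> nat \<Rightarrow> real \<Rightarrow> 'a pot" where
  "dyson_term L d \<Phi> \<Theta> 0 u = \<Theta>"
| "dyson_term L d \<Phi> \<Theta> (Suc n) u = (\<lambda>Z \<sigma> \<tau>.
     integral {0..u} (\<lambda>s. pot_ad L d (\<Phi> s) (dyson_term L d \<Phi> \<Theta> n s) Z \<sigma> \<tau>))"

definition evol :: "'a set \<Rightarrow> ('a \<Rightarrow> nat) \<Rightarrow> (real \<Rightarrow> 'a pot) \<Rightarrow> real \<Rightarrow> 'a pot \<Rightarrow> 'a pot" where
  "evol L d \<Phi> t \<Theta> = (\<lambda>Z \<sigma> \<tau>. \<Sum>n. \<i> ^ n * dyson_term L d \<Phi> \<Theta> n t Z \<sigma> \<tau>)"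

definition regular_tpot :: "'a set \<Rightarrow> ('a \<Rightarrow> nat) \<Rightarrow> real \<Rightarrow> (real \<Rightarrow> 'a pot) \<Rightarrow> bool" where
  "regular_tpot L d t \<Phi> \<longleftrightarrow> (\<forall>s\<in>{0..t}. is_potential L d (\<Phi> s)) \<and>
     (\<forall>Z. Z \<subseteq> L \<longrightarrow> (\<forall>\<sigma>\<in>confs L d. \<forall>\<tau>\<in>confs L d.
        (\<lambda>s. \<Phi> s Z \<sigma> \<tau>) \<in> borel_measurable (lebesgue_on {0..t}) \<and>
        bounded ((\<lambda>s. \<Phi> s Z \<sigma> \<tau>) ` {0..t})))"

end

(* Commutators lose decay in a controlled way: for 0 <= k1 < k2,
   ||ad_A B||_k1 <= 4 e^(-k1) / (e (k2 - k1)) ||A||_k2 ||B||_k2, since a set meeting Z1 can be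
   charged to one of the |Z1| sites of Z1 and |Z| e^(k1 |Z|) <= e^(k2 |Z|) / (e (k2 - k1)).
   Spending the gap kappa - kappa' in n equal steps of size eps, the n-th Dyson term is bounded by
   (4 e^(-kappa') / (e eps) int_0^t ||Phi||_kappa)^n / n! ||Theta||_kappa, the 1/n! coming from the
   time-ordered integrals (int_0^t f F^k <= F(t)^(k+1) / (k+1) for F(s) = int_0^s f), and
   n^n / n! <= e^n makes this geometric.  For the difference of two Dyson
   terms, ad_Phi D_n - ad_Phi' D'_n = ad_(Phi - Phi') D_n + ad_Phi' (D_n - D'_n) yields one factor
   int_0^t ||Phi - Phi'||_kappa, and under 12 lambda t <= kappa - kappa' the (n+1)-st difference is at
   most 4 e^(-kappa') / (kappa - kappa') (n+1) (2/3)^n times ||Theta||_kappa int_0^t ||Phi - Phi'||_kappa.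
   Summing, the difference of the evolutions is at most 36 e^(-kappa') / (kappa - kappa') times the
   same product, which is below M t ||Theta||_kappa ||Delta||_kappa. *)

theory Submission
  imports Defs
begin

lemma power_div_fact_le_exp:
  fixes x :: real
  assumes "0 \<le> x"
  shows "x ^ n / fact n \<le> exp x"
proof -
  have "(\<lambda>k. x ^ k / fact k) sums exp x"
    using exp_converges[of x] by (simp add: divide_inverse_commute)
  then show ?thesis
    using sum_le_suminf[of "\<lambda>k. x ^ k / fact k" "{n}"] assms by (auto simp: sums_iff)
qed

lemma exp_mult_le_exp_div_gap:
  fixes x :: real
  assumes "0 \<le> x" "\<kappa>1 < \<kappa>2"
  shows "exp (\<kappa>1 * x) * x \<le> exp (\<kappa>2 * x) / (exp 1 * (\<kappa>2 - \<kappa>1))"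
proof -
  have "(\<kappa>2 - \<kappa>1) * x * exp 1 \<le> exp ((\<kappa>2 - \<kappa>1) * x)"
    using exp_ge_add_one_self[of "(\<kappa>2 - \<kappa>1) * x - 1"] by (simp add: exp_diff pos_le_divide_eq)
  then have "exp (\<kappa>1 * x) * ((\<kappa>2 - \<kappa>1) * x * exp 1) \<le> exp (\<kappa>1 * x) * exp ((\<kappa>2 - \<kappa>1) * x)"
    by (intro mult_left_mono) auto
  also have "\<dots> = exp (\<kappa>2 * x)" by (simp add: exp_add[symmetric] algebra_simps)
  finally show ?thesis using assms by (simp add: pos_le_divide_eq ac_simps)
qed

lemma power_mult_diff_le:
  fixes p q :: real
  assumes "0 \<le> p" "p \<le> q"
  shows "q ^ m * (q - p) \<le> (q ^ Suc m - p ^ Suc m) / real (Suc m) + (q ^ m - p ^ m) * (q - p)"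
proof -
  have "(\<Sum>i<Suc m. p ^ m) \<le> (\<Sum>i<Suc m. p ^ (Suc m - Suc i) * q ^ i)"
  proof (rule sum_mono)
    fix i assume "i \<in> {..<Suc m}"
    then have "p ^ m = p ^ (Suc m - Suc i) * p ^ i" by (simp add: power_add[symmetric])
    also have "\<dots> \<le> p ^ (Suc m - Suc i) * q ^ i" using assms by (intro mult_left_mono power_mono) auto
    finally show "p ^ m \<le> p ^ (Suc m - Suc i) * q ^ i" .
  qed
  then have "(q - p) * (\<Sum>i<Suc m. p ^ m) \<le> q ^ Suc m - p ^ Suc m"
    unfolding power_diff_sumr2[of q "Suc m" p] using assms by (intro mult_left_mono) auto
  then have "p ^ m * (q - p) \<le> (q ^ Suc m - p ^ Suc m) / real (Suc m)"
    by (simp add: field_simps)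
  then show ?thesis by (simp add: algebra_simps)
qed

section \<open>Bounded measurable functions on an interval\<close>

definition bounded_measurable :: "real \<Rightarrow> (real \<Rightarrow> 'b::euclidean_space) \<Rightarrow> bool" where
  "bounded_measurable t h \<longleftrightarrow>
     h \<in> borel_measurable (lebesgue_on {0..t}) \<and> (\<exists>B. \<forall>s\<in>{0..t}. norm (h s) \<le> B)"

lemma bounded_measurable_integrable: "bounded_measurable t h \<Longrightarrow> h integrable_on {0..t}"
  unfolding bounded_measurable_def
  by (auto intro: measurable_bounded_by_integrable_imp_integrable[where g="\<lambda>_. _"])

lemma bounded_measurable_subinterval:
  "bounded_measurable t h \<Longrightarrow> u \<le> t \<Longrightarrow> bounded_measurable u h"
  unfolding bounded_measurable_def by (fastforce intro: measurable_restrict_mono)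

lemma integrable_on_subinterval_bounded_measurable:
  "bounded_measurable t h \<Longrightarrow> u \<le> t \<Longrightarrow> h integrable_on {0..u}"
  by (blast intro: bounded_measurable_integrable bounded_measurable_subinterval)

lemma bounded_measurable_const: "bounded_measurable t (\<lambda>_. c)"
  unfolding bounded_measurable_def by auto

lemma bounded_measurable_continuous:
  assumes "continuous_on {0..t} h" shows "bounded_measurable t h"
proof -
  have "bounded (h ` {0..t})" using assms by (intro compact_imp_bounded compact_continuous_image) auto
  then show ?thesis
    unfolding bounded_measurable_def bounded_iff
    using continuous_imp_measurable_on_sets_lebesgue[OF assms] by auto
qed

lemma bounded_measurable_add:
  "bounded_measurable t f \<Longrightarrow> bounded_measurable t g \<Longrightarrow> bounded_measurable t (\<lambda>s. f s + g s)"
  unfolding bounded_measurable_def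
  by (auto intro!: exI[where x="_ + _"] norm_triangle_le add_mono)

lemma bounded_measurable_diff:
  "bounded_measurable t f \<Longrightarrow> bounded_measurable t g \<Longrightarrow> bounded_measurable t (\<lambda>s. f s - g s)"
  unfolding bounded_measurable_def
  by (auto intro!: exI[where x="_ + _"] norm_triangle_le_diff add_mono)

lemma bounded_measurable_mult:
  fixes f g :: "real \<Rightarrow> 'b::{euclidean_space, real_normed_algebra}"
  assumes "bounded_measurable t f" "bounded_measurable t g"
  shows "bounded_measurable t (\<lambda>s. f s * g s)"
proof -
  obtain B1 B2 where "\<forall>s\<in>{0..t}. norm (f s) \<le> B1" "\<forall>s\<in>{0..t}. norm (g s) \<le> B2"
    using assms unfolding bounded_measurable_def by blast
  then have "\<forall>s\<in>{0..t}. norm (f s * g s) \<le> B1 * B2"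
    by (metis norm_ge_zero norm_mult_ineq mult_mono order_trans)
  then show ?thesis using assms unfolding bounded_measurable_def by auto
qed

lemma bounded_measurable_sum:
  "(\<And>i. i \<in> I \<Longrightarrow> bounded_measurable t (f i)) \<Longrightarrow> bounded_measurable t (\<lambda>s. \<Sum>i\<in>I. f i s)"
  by (induction I rule: infinite_finite_induct) (auto simp: bounded_measurable_const bounded_measurable_add)

lemma bounded_measurable_norm: "bounded_measurable t f \<Longrightarrow> bounded_measurable t (\<lambda>s. norm (f s))"
  unfolding bounded_measurable_def by auto

lemma bounded_measurable_dominated:
  fixes f g :: "real \<Rightarrow> real"
  assumes "f \<in> borel_measurable (lebesgue_on {0..t})" "bounded_measurable t g"
    and "\<And>s. s \<in> {0..t} \<Longrightarrow> 0 \<le> f s \<and> f s \<le> g s"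
  shows "bounded_measurable t f"
proof -
  obtain B where B: "\<forall>s\<in>{0..t}. norm (g s) \<le> B" using assms(2) unfolding bounded_measurable_def by blast
  have "norm (f s) \<le> B" if "s \<in> {0..t}" for s
    using assms(3)[OF that] bspec[OF B that] abs_ge_self[of "g s"] by simp
  then have "\<forall>s\<in>{0..t}. norm (f s) \<le> B" by blast
  then show ?thesis using assms(1) unfolding bounded_measurable_def by blast
qed

lemma integral_uniform_partition:
  fixes h :: "real \<Rightarrow> real" and N :: nat
  assumes h: "h integrable_on {0..u}" and u: "0 \<le> u" and N: "0 < N"
  shows "integral {0..u} h = (\<Sum>i<N. integral {real i * u / N .. real (Suc i) * u / N} h)"
proof -
  have "integral {0..real n * u / N} h = (\<Sum>i<n. integral {real i * u / N .. real (Suc i) * u / N} h)"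
    if "n \<le> N" for n
    using that
  proof (induction n)
    case (Suc n)
    have le: "real n * u / N \<le> real (Suc n) * u / N"
      using u by (intro divide_right_mono mult_right_mono) auto
    have "real (Suc n) * u / N \<le> real N * u / N"
      using Suc.prems u by (intro divide_right_mono mult_right_mono) auto
    then have "h integrable_on {0..real (Suc n) * u / N}"
      using N by (intro integrable_on_subinterval[OF h]) auto
    then have "integral {0..real (Suc n) * u / N} h
        = integral {0..real n * u / N} h + integral {real n * u / N..real (Suc n) * u / N} h"
      using u le by (intro Henstock_Kurzweil_Integration.integral_combine[symmetric]) auto
    then show ?case using Suc by simp
  qed simp
  from this[of N] show ?thesis using N by simp
qed

lemma integral_nonneg_bounded_measurable:
  fixes f :: "real \<Rightarrow> real"
  assumes "bounded_measurable t f" "\<And>s. s \<in> {0..t} \<Longrightarrow> 0 \<le> f s" "u \<le> t"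
  shows "0 \<le> integral {0..u} f"
  using assms by (intro integral_nonneg integrable_on_subinterval_bounded_measurable) auto

lemma integral_mono_bounded_measurable:
  fixes f :: "real \<Rightarrow> real"
  assumes "bounded_measurable t f" "\<And>s. s \<in> {0..t} \<Longrightarrow> 0 \<le> f s" "u \<le> t"
  shows "integral {0..u} f \<le> integral {0..t} f"
  using assms by (intro integral_subset_le bounded_measurable_integrable integrable_on_subinterval_bounded_measurable) auto

lemma integral_mult_power_integral_le_cell:
  fixes f :: "real \<Rightarrow> real"
  assumes f: "bounded_measurable t f" "\<And>s. s \<in> {0..t} \<Longrightarrow> 0 \<le> f s" and a: "0 \<le> a"
    and xy: "0 \<le> x" "x \<le> y" "y \<le> t"
  defines "F \<equiv> \<lambda>s. integral {0..s} f"
  shows "integral {x..y} (\<lambda>s. f s * (a + F s) ^ m)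
    \<le> ((a + F y) ^ Suc m - (a + F x) ^ Suc m) / real (Suc m) + ((a + F y) ^ m - (a + F x) ^ m) * integral {x..y} f"
proof -
  have int: "h integrable_on {x..y}" if "bounded_measurable t h" for h
    using xy by (intro integrable_on_subinterval[OF bounded_measurable_integrable[OF that]]) auto
  have F_nonneg: "0 \<le> F s" and F_mono: "F s \<le> F y" if "s \<le> y" for s
    using that xy f unfolding F_def
    by (auto intro: integral_nonneg_bounded_measurable integral_mono_bounded_measurable bounded_measurable_subinterval)
  have F_diff: "F y - F x = integral {x..y} f"
    using Henstock_Kurzweil_Integration.integral_combine[OF xy(1,2) integrable_on_subinterval_bounded_measurable[OF f(1) xy(3)]]
    unfolding F_def by simp
  have "continuous_on {0..t} F"
    unfolding F_def by (rule indefinite_integral_continuous_1[OF bounded_measurable_integrable[OF f(1)]])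
  then have "bounded_measurable t (\<lambda>s. f s * (a + F s) ^ m)"
    by (intro bounded_measurable_mult[OF f(1)] bounded_measurable_continuous continuous_intros)
  then have "integral {x..y} (\<lambda>s. f s * (a + F s) ^ m) \<le> integral {x..y} (\<lambda>s. f s * (a + F y) ^ m)"
    using xy a F_nonneg F_mono
    by (intro integral_le int integrable_on_mult_left f(1) mult_left_mono power_mono add_left_mono f(2)) auto
  also have "\<dots> = (a + F y) ^ m * ((a + F y) - (a + F x))" using F_diff by (simp add: mult.commute)
  also have "\<dots> \<le> ((a + F y) ^ Suc m - (a + F x) ^ Suc m) / real (Suc m)
      + ((a + F y) ^ m - (a + F x) ^ m) * ((a + F y) - (a + F x))"
    using a F_nonneg F_mono xy by (intro power_mult_diff_le) auto
  finally show ?thesis using F_diff by simp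
qed

text \<open>A Riemann-sum version of the chain rule \<open>\<integral>\<^sub>0\<^sup>t f (a + F)\<^sup>m = [(a + F)\<^sup>m\<^sup>+\<^sup>1 / (m+1)]\<^sub>0\<^sup>t\<close>
  for \<open>F s = \<integral>\<^sub>0\<^sup>s f\<close>: the error of the partition into \<open>N\<close> cells is at most \<open>B t / N\<close> times
  a telescoping sum.\<close>

lemma integral_mult_power_integral_le_partition:
  fixes f :: "real \<Rightarrow> real" and N :: nat
  assumes f: "bounded_measurable t f" "\<And>s. s \<in> {0..t} \<Longrightarrow> 0 \<le> f s"
    and B: "\<And>s. s \<in> {0..t} \<Longrightarrow> f s \<le> B" and a: "0 \<le> a" and t: "0 \<le> t" and N: "0 < N"
  defines "F \<equiv> \<lambda>s. integral {0..s} f"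
  shows "integral {0..t} (\<lambda>s. f s * (a + F s) ^ m)
     \<le> ((a + F t) ^ Suc m - a ^ Suc m) / real (Suc m) + B * t / N * ((a + F t) ^ m - a ^ m)"
proof -
  define x where "x i = real i * t / N" for i
  have x: "0 \<le> x i" "x i \<le> x (Suc i)" for i
    unfolding x_def using t by (simp, intro divide_right_mono mult_right_mono) auto
  have x_le: "x i \<le> t" if "i \<le> N" for i
    unfolding x_def using that t N by (simp add: divide_le_eq mult.commute mult_left_mono)
  have "continuous_on {0..t} F"
    unfolding F_def by (rule indefinite_integral_continuous_1[OF bounded_measurable_integrable[OF f(1)]])
  then have "bounded_measurable t (\<lambda>s. f s * (a + F s) ^ m)"
    by (intro bounded_measurable_mult[OF f(1)] bounded_measurable_continuous continuous_intros)
  then have "integral {0..t} (\<lambda>s. f s * (a + F s) ^ m) = (\<Sum>i<N. integral {x i..x (Suc i)} (\<lambda>s. f s * (a + F s) ^ m))"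
    unfolding x_def by (intro integral_uniform_partition bounded_measurable_integrable t N)
  also have "\<dots> \<le> (\<Sum>i<N. ((a + F (x (Suc i))) ^ Suc m - (a + F (x i)) ^ Suc m) / real (Suc m)
                  + ((a + F (x (Suc i))) ^ m - (a + F (x i)) ^ m) * (B * t / N))"
  proof (rule sum_mono)
    fix i assume "i \<in> {..<N}"
    then have xs: "x (Suc i) \<le> t" using x_le[of "Suc i"] by simp
    have "integral {x i..x (Suc i)} f \<le> integral {x i..x (Suc i)} (\<lambda>_. B)"
      using x[of i] xs by (intro integral_le integrable_on_subinterval[OF bounded_measurable_integrable[OF f(1)]] B) auto
    also have "\<dots> = B * t / N" using x(2)[of i] N unfolding x_def by (simp add: field_simps)
    finally have "integral {x i..x (Suc i)} f \<le> B * t / N" .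
    moreover have "(a + F (x i)) ^ m \<le> (a + F (x (Suc i))) ^ m"
    proof (intro power_mono add_left_mono)
      have f_sub: "bounded_measurable (x (Suc i)) f" by (rule bounded_measurable_subinterval[OF f(1) xs])
      show "F (x i) \<le> F (x (Suc i))"
        unfolding F_def using xs f(2) by (intro integral_mono_bounded_measurable[OF f_sub] x) auto
      show "0 \<le> a + F (x i)"
        unfolding F_def using a x[of i] xs f(2)
        by (intro add_nonneg_nonneg integral_nonneg_bounded_measurable[OF f(1)]) auto
    qed
    ultimately show "integral {x i..x (Suc i)} (\<lambda>s. f s * (a + F s) ^ m)
        \<le> ((a + F (x (Suc i))) ^ Suc m - (a + F (x i)) ^ Suc m) / real (Suc m)
          + ((a + F (x (Suc i))) ^ m - (a + F (x i)) ^ m) * (B * t / N)"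
      using integral_mult_power_integral_le_cell[OF f a x xs, of m] unfolding F_def
      by (smt (verit) mult_left_mono)
  qed
  also have "\<dots> = ((a + F t) ^ Suc m - a ^ Suc m) / real (Suc m) + B * t / N * ((a + F t) ^ m - a ^ m)"
    using sum_lessThan_telescope[of "\<lambda>i. (a + F (x i)) ^ Suc m" N]
      sum_lessThan_telescope[of "\<lambda>i. (a + F (x i)) ^ m" N] N
    by (simp add: sum.distrib sum_divide_distrib[symmetric] sum_distrib_right[symmetric] x_def F_def)
  finally show ?thesis .
qed

lemma integral_mult_power_integral_le:
  fixes f :: "real \<Rightarrow> real"
  assumes f: "bounded_measurable t f" "\<And>s. s \<in> {0..t} \<Longrightarrow> 0 \<le> f s" and a: "0 \<le> a" and t: "0 \<le> t"
  shows "integral {0..t} (\<lambda>s. f s * (a + integral {0..s} f) ^ m)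
    \<le> ((a + integral {0..t} f) ^ Suc m - a ^ Suc m) / real (Suc m)"
proof (rule field_le_epsilon)
  fix \<gamma> :: real assume \<gamma>: "0 < \<gamma>"
  obtain B where "\<forall>s\<in>{0..t}. norm (f s) \<le> B" using f(1) unfolding bounded_measurable_def by blast
  then have B: "\<And>s. s \<in> {0..t} \<Longrightarrow> f s \<le> B" by fastforce
  define K where "K = (a + integral {0..t} f) ^ m - a ^ m"
  have K0: "0 \<le> K"
    unfolding K_def using integral_nonneg[OF bounded_measurable_integrable[OF f(1)]] f(2) a
    by (auto intro: power_mono)
  obtain N :: nat where N: "\<bar>B\<bar> * t * K / \<gamma> < N" using reals_Archimedean2 by blast
  have "0 \<le> \<bar>B\<bar> * t * K / \<gamma>" using \<gamma> K0 t by simp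
  then have N0: "0 < N" using N by linarith
  have "B * t / N * K \<le> \<bar>B\<bar> * t * K / N"
    using t K0 N0 by (simp add: divide_right_mono mult_right_mono mult_nonneg_nonneg)
  also have "\<dots> \<le> \<gamma>" using N N0 \<gamma> by (simp add: field_simps)
  finally show "integral {0..t} (\<lambda>s. f s * (a + integral {0..s} f) ^ m)
      \<le> ((a + integral {0..t} f) ^ Suc m - a ^ Suc m) / real (Suc m) + \<gamma>"
    using integral_mult_power_integral_le_partition[OF f B a t N0, of m] unfolding K_def by simp
qed

lemma integral_add_mult_power_integral_le:
  fixes g h :: "real \<Rightarrow> real"
  assumes g: "bounded_measurable t g" and h: "bounded_measurable t h" "\<And>s. s \<in> {0..t} \<Longrightarrow> 0 \<le> h s"
    and "0 \<le> a" "0 \<le> t" "0 \<le> K"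
  shows "integral {0..t} (\<lambda>s. K' * g s + K * (h s * (a + integral {0..s} h) ^ m))
    \<le> K' * integral {0..t} g + K * (((a + integral {0..t} h) ^ Suc m - a ^ Suc m) / real (Suc m))"
proof -
  have "continuous_on {0..t} (\<lambda>s. integral {0..s} h)"
    by (rule indefinite_integral_continuous_1[OF bounded_measurable_integrable[OF h(1)]])
  then have "bounded_measurable t (\<lambda>s. h s * (a + integral {0..s} h) ^ m)"
    by (intro bounded_measurable_mult[OF h(1)] bounded_measurable_continuous continuous_intros)
  then have "integral {0..t} (\<lambda>s. K' * g s + K * (h s * (a + integral {0..s} h) ^ m))
      = K' * integral {0..t} g + K * integral {0..t} (\<lambda>s. h s * (a + integral {0..s} h) ^ m)"
    by (simp add: Henstock_Kurzweil_Integration.integral_add integrable_on_mult_right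
        bounded_measurable_integrable g)
  also have "\<dots> \<le> K' * integral {0..t} g + K * (((a + integral {0..t} h) ^ Suc m - a ^ Suc m) / real (Suc m))"
    using assms by (intro add_left_mono mult_left_mono integral_mult_power_integral_le) auto
  finally show ?thesis .
qed

section \<open>Vectors and operators on the configuration space\<close>

lemma sum_apply: "(sum f A) x = (\<Sum>a\<in>A. f a x)"
  by (induction A rule: infinite_finite_induct) auto

lemma finite_confs:
  assumes "finite L" shows "finite (confs L d)"
proof -
  let ?B = "{..Max (insert 0 (d ` L))}"
  have "confs L d \<subseteq> {f. \<forall>x. (x \<in> L \<longrightarrow> f x \<in> ?B) \<and> (x \<notin> L \<longrightarrow> f x = 0)}"
  proof
    fix f assume "f \<in> confs L d"
    then have h: "\<forall>x\<in>L. f x < d x" "\<forall>x. x \<notin> L \<longrightarrow> f x = 0" unfolding confs_def by auto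
    have "\<forall>x\<in>L. f x \<le> Max (insert 0 (d ` L))"
    proof
      fix x assume "x \<in> L"
      then have "d x \<le> Max (insert 0 (d ` L))" using assms by (intro Max_ge) auto
      then show "f x \<le> Max (insert 0 (d ` L))" using h(1) \<open>x \<in> L\<close> by fastforce
    qed
    then show "f \<in> {f. \<forall>x. (x \<in> L \<longrightarrow> f x \<in> ?B) \<and> (x \<notin> L \<longrightarrow> f x = 0)}" using h by auto
  qed
  moreover have "finite {f. \<forall>x. (x \<in> L \<longrightarrow> f x \<in> ?B) \<and> (x \<notin> L \<longrightarrow> f x = 0)}"
    by (rule finite_set_of_finite_funs) (use assms in auto)
  ultimately show ?thesis by (rule finite_subset)
qed

lemma vnorm_eq_L2_set: "vnorm L d v = L2_set (\<lambda>\<sigma>. cmod (v \<sigma>)) (confs L d)"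
  unfolding vnorm_def L2_set_def by simp

lemma vnorm_nonneg: "0 \<le> vnorm L d v"
  unfolding vnorm_def by (simp add: sum_nonneg)

lemma vnorm_triangle: "vnorm L d (\<lambda>\<sigma>. u \<sigma> + w \<sigma>) \<le> vnorm L d u + vnorm L d w"
proof -
  have "vnorm L d (\<lambda>\<sigma>. u \<sigma> + w \<sigma>) \<le> L2_set (\<lambda>\<sigma>. cmod (u \<sigma>) + cmod (w \<sigma>)) (confs L d)"
    unfolding vnorm_eq_L2_set by (rule L2_set_mono) (auto simp: norm_triangle_ineq)
  also have "\<dots> \<le> vnorm L d u + vnorm L d w" unfolding vnorm_eq_L2_set by (rule L2_set_triangle_ineq)
  finally show ?thesis .
qed

lemma vnorm_scale: "vnorm L d (\<lambda>\<sigma>. c * u \<sigma>) = cmod c * vnorm L d u"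
  unfolding vnorm_eq_L2_set by (simp add: norm_mult L2_set_right_distrib)

lemma vnorm_cong: "(\<And>\<sigma>. \<sigma> \<in> confs L d \<Longrightarrow> u \<sigma> = w \<sigma>) \<Longrightarrow> vnorm L d u = vnorm L d w"
  unfolding vnorm_def by simp

lemma norm_le_vnorm: "finite L \<Longrightarrow> \<sigma> \<in> confs L d \<Longrightarrow> cmod (v \<sigma>) \<le> vnorm L d v"
  unfolding vnorm_eq_L2_set by (rule member_le_L2_set) (auto simp: finite_confs)

lemma vnorm_le_sum_norm: "vnorm L d v \<le> (\<Sum>\<sigma>\<in>confs L d. cmod (v \<sigma>))"
  unfolding vnorm_eq_L2_set by (rule L2_set_le_sum) auto

lemma norm_sum_cnj_mult_le: "cmod (\<Sum>\<sigma>\<in>confs L d. cnj (w \<sigma>) * u \<sigma>) \<le> vnorm L d w * vnorm L d u"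
proof -
  have "cmod (\<Sum>\<sigma>\<in>confs L d. cnj (w \<sigma>) * u \<sigma>) \<le> (\<Sum>\<sigma>\<in>confs L d. \<bar>cmod (w \<sigma>)\<bar> * \<bar>cmod (u \<sigma>)\<bar>)"
    by (rule order_trans[OF norm_sum]) (simp add: norm_mult)
  also have "\<dots> \<le> vnorm L d w * vnorm L d u" unfolding vnorm_eq_L2_set by (rule L2_set_mult_ineq)
  finally show ?thesis .
qed

lemma vnorm_eq_0_iff: "finite L \<Longrightarrow> vnorm L d v = 0 \<longleftrightarrow> (\<forall>\<sigma>\<in>confs L d. v \<sigma> = 0)"
  unfolding vnorm_def by (simp add: sum_nonneg_eq_0_iff finite_confs)

lemma sum_cnj_mult_self: "(\<Sum>\<sigma>\<in>confs L d. cnj (v \<sigma>) * v \<sigma>) = complex_of_real ((vnorm L d v)^2)"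
proof -
  have "(\<Sum>\<sigma>\<in>confs L d. cnj (v \<sigma>) * v \<sigma>) = (\<Sum>\<sigma>\<in>confs L d. complex_of_real ((cmod (v \<sigma>))^2))"
  proof (rule sum.cong)
    fix x show "cnj (v x) * v x = complex_of_real ((cmod (v x))^2)"
      using complex_norm_square[of "v x"] by (simp only: mult.commute)
  qed simp
  also have "\<dots> = complex_of_real ((vnorm L d v)^2)" unfolding vnorm_def by (simp add: sum_nonneg)
  finally show ?thesis .
qed

definition op_l1norm :: "'a set \<Rightarrow> ('a \<Rightarrow> nat) \<Rightarrow> 'a op \<Rightarrow> real" where
  "op_l1norm L d A = (\<Sum>\<sigma>\<in>confs L d. \<Sum>\<tau>\<in>confs L d. cmod (A \<sigma> \<tau>))"

lemma op_l1norm_nonneg: "0 \<le> op_l1norm L d A" unfolding op_l1norm_def by (simp add: sum_nonneg)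

lemma op_apply_zero: "op_apply L d A (\<lambda>_. 0) = (\<lambda>_. 0)"
  unfolding op_apply_def by simp

lemma vnorm_zero: "vnorm L d (\<lambda>_. 0) = 0" unfolding vnorm_def by simp

lemma op_apply_scale: "op_apply L d A (\<lambda>\<tau>. c * v \<tau>) = (\<lambda>\<sigma>. c * op_apply L d A v \<sigma>)"
  unfolding op_apply_def by (auto simp: sum_distrib_left ac_simps)

lemma opnorm_cong: "(\<And>\<sigma> \<tau>. \<sigma> \<in> confs L d \<Longrightarrow> \<tau> \<in> confs L d \<Longrightarrow> A \<sigma> \<tau> = B \<sigma> \<tau>) \<Longrightarrow> opnorm L d A = opnorm L d B"
proof -
  assume h: "\<And>\<sigma> \<tau>. \<sigma> \<in> confs L d \<Longrightarrow> \<tau> \<in> confs L d \<Longrightarrow> A \<sigma> \<tau> = B \<sigma> \<tau>"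
  have "vnorm L d (op_apply L d A v) = vnorm L d (op_apply L d B v)" for v
    by (rule vnorm_cong) (auto simp: op_apply_def h intro!: sum.cong)
  then show ?thesis unfolding opnorm_def by simp
qed

lemma op_apply_add: "op_apply L d (A + B) v = (\<lambda>\<sigma>. op_apply L d A v \<sigma> + op_apply L d B v \<sigma>)"
  unfolding op_apply_def by (auto simp: distrib_right sum.distrib)

lemma op_apply_add_right:
  "op_apply L d A (\<lambda>\<tau>. u \<tau> + w \<tau>) = (\<lambda>\<sigma>. op_apply L d A u \<sigma> + op_apply L d A w \<sigma>)"
  unfolding op_apply_def by (auto simp: distrib_left sum.distrib)

lemma op_apply_mult: "op_apply L d (op_mult L d A B) v = op_apply L d A (op_apply L d B v)"
  unfolding op_apply_def op_mult_def
  by (auto simp: sum_distrib_right sum_distrib_left ac_simps intro: sum.swap)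

locale finite_sites =
  fixes L :: "'a set" and d :: "'a \<Rightarrow> nat"
  assumes finite_L: "finite L"

context finite_sites
begin

lemma vnorm_op_apply_le_l1norm: "vnorm L d (op_apply L d A v) \<le> op_l1norm L d A * vnorm L d v"
proof -
  have "vnorm L d (op_apply L d A v) \<le> (\<Sum>\<sigma>\<in>confs L d. cmod (op_apply L d A v \<sigma>))"
    by (rule vnorm_le_sum_norm)
  also have "\<dots> \<le> (\<Sum>\<sigma>\<in>confs L d. \<Sum>\<tau>\<in>confs L d. cmod (A \<sigma> \<tau>) * vnorm L d v)"
  proof (rule sum_mono)
    fix \<sigma> assume "\<sigma> \<in> confs L d"
    have "cmod (op_apply L d A v \<sigma>) \<le> (\<Sum>\<tau>\<in>confs L d. cmod (A \<sigma> \<tau> * v \<tau>))"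
      unfolding op_apply_def by (rule norm_sum)
    also have "\<dots> \<le> (\<Sum>\<tau>\<in>confs L d. cmod (A \<sigma> \<tau>) * vnorm L d v)"
      by (rule sum_mono) (auto simp: norm_mult intro!: mult_left_mono norm_le_vnorm finite_L)
    finally show "cmod (op_apply L d A v \<sigma>) \<le> (\<Sum>\<tau>\<in>confs L d. cmod (A \<sigma> \<tau>) * vnorm L d v)" .
  qed
  also have "\<dots> = op_l1norm L d A * vnorm L d v" unfolding op_l1norm_def by (simp add: sum_distrib_right)
  finally show ?thesis .
qed

lemma bdd_above_opnorm: "bdd_above {vnorm L d (op_apply L d A v) | v. vnorm L d v \<le> 1}"
proof (rule bdd_aboveI)
  fix y assume "y \<in> {vnorm L d (op_apply L d A v) | v. vnorm L d v \<le> 1}"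
  then obtain v where "y = vnorm L d (op_apply L d A v)" "vnorm L d v \<le> 1" by auto
  then show "y \<le> op_l1norm L d A"
    using vnorm_op_apply_le_l1norm[of A v] op_l1norm_nonneg[of L d A] by (metis mult_left_le order_trans)
qed

lemma vnorm_op_apply_le_opnorm: "vnorm L d v \<le> 1 \<Longrightarrow> vnorm L d (op_apply L d A v) \<le> opnorm L d A"
  unfolding opnorm_def by (rule cSup_upper) (auto intro: bdd_above_opnorm)

lemma opnorm_nonneg: "0 \<le> opnorm L d A"
  using vnorm_op_apply_le_opnorm[of "\<lambda>_. 0" A] by (simp add: vnorm_zero op_apply_zero)

lemma opnorm_least: "(\<And>v. vnorm L d v \<le> 1 \<Longrightarrow> vnorm L d (op_apply L d A v) \<le> c) \<Longrightarrow> opnorm L d A \<le> c"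
  unfolding opnorm_def by (rule cSup_least) (auto intro: exI[of _ "\<lambda>_. 0"] simp: vnorm_zero)

lemma vnorm_op_apply_le: "vnorm L d (op_apply L d A v) \<le> opnorm L d A * vnorm L d v"
proof (cases "vnorm L d v = 0")
  case True
  then have "\<forall>\<sigma>\<in>confs L d. v \<sigma> = 0" using vnorm_eq_0_iff[OF finite_L] by auto
  then have "op_apply L d A v = (\<lambda>_. 0)" unfolding op_apply_def by auto
  then show ?thesis using True by (simp add: vnorm_zero)
next
  case False
  then have pos: "0 < vnorm L d v" using vnorm_nonneg[of L d v] by simp
  define w where "w = (\<lambda>\<tau>. complex_of_real (1 / vnorm L d v) * v \<tau>)"
  have "vnorm L d w = 1" unfolding w_def vnorm_scale using pos by (simp add: norm_divide)
  then have "vnorm L d (op_apply L d A w) \<le> opnorm L d A" by (intro vnorm_op_apply_le_opnorm) simp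
  moreover have "vnorm L d (op_apply L d A w) = vnorm L d (op_apply L d A v) / vnorm L d v"
    unfolding w_def op_apply_scale vnorm_scale using pos by (simp add: norm_divide)
  ultimately show ?thesis using pos by (simp add: divide_le_eq)
qed

lemma opnorm_le_l1norm: "opnorm L d A \<le> op_l1norm L d A"
  by (rule opnorm_least) (metis vnorm_op_apply_le_l1norm op_l1norm_nonneg mult_left_le order_trans)

lemma opnorm_leI: "0 \<le> c \<Longrightarrow> (\<And>v. vnorm L d (op_apply L d A v) \<le> c * vnorm L d v) \<Longrightarrow> opnorm L d A \<le> c"
  by (rule opnorm_least) (metis mult_left_le order_trans)

lemma opnorm_add: "opnorm L d (A + B) \<le> opnorm L d A + opnorm L d B"
proof (rule opnorm_leI)
  show "0 \<le> opnorm L d A + opnorm L d B" using opnorm_nonneg by (simp add: add_nonneg_nonneg)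
  fix v
  have "vnorm L d (op_apply L d (A + B) v) \<le> vnorm L d (op_apply L d A v) + vnorm L d (op_apply L d B v)"
    unfolding op_apply_add by (rule vnorm_triangle)
  also have "\<dots> \<le> opnorm L d A * vnorm L d v + opnorm L d B * vnorm L d v"
    by (intro add_mono vnorm_op_apply_le)
  finally show "vnorm L d (op_apply L d (A + B) v) \<le> (opnorm L d A + opnorm L d B) * vnorm L d v"
    by (simp add: distrib_right)
qed

lemma opnorm_scale_le: "opnorm L d (\<lambda>\<sigma> \<tau>. c * A \<sigma> \<tau>) \<le> cmod c * opnorm L d A"
proof (rule opnorm_leI)
  show "0 \<le> cmod c * opnorm L d A" by (simp add: opnorm_nonneg)
  fix v
  have "op_apply L d (\<lambda>\<sigma> \<tau>. c * A \<sigma> \<tau>) v = (\<lambda>\<sigma>. c * op_apply L d A v \<sigma>)"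
    unfolding op_apply_def by (auto simp: sum_distrib_left ac_simps)
  then have "vnorm L d (op_apply L d (\<lambda>\<sigma> \<tau>. c * A \<sigma> \<tau>) v) = cmod c * vnorm L d (op_apply L d A v)"
    by (simp add: vnorm_scale)
  also have "\<dots> \<le> cmod c * (opnorm L d A * vnorm L d v)" by (intro mult_left_mono vnorm_op_apply_le) auto
  finally show "vnorm L d (op_apply L d (\<lambda>\<sigma> \<tau>. c * A \<sigma> \<tau>) v) \<le> cmod c * opnorm L d A * vnorm L d v"
    by (simp add: ac_simps)
qed

lemma opnorm_uminus_le: "opnorm L d (- A) \<le> opnorm L d A"
proof -
  have "- A = (\<lambda>\<sigma> \<tau>. (-1) * A \<sigma> \<tau>)" by (auto simp: fun_eq_iff)
  then have "opnorm L d (- A) = opnorm L d (\<lambda>\<sigma> \<tau>. (-1) * A \<sigma> \<tau>)" by simp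
  also have "\<dots> \<le> opnorm L d A" using opnorm_scale_le[of "-1" A] by simp
  finally show ?thesis .
qed

lemma opnorm_diff: "opnorm L d (A - B) \<le> opnorm L d A + opnorm L d B"
  using opnorm_add[of A "- B"] opnorm_uminus_le[of B] by simp

lemma opnorm_zero: "opnorm L d (\<lambda>_ _. 0) = 0"
proof -
  have "opnorm L d (\<lambda>_ _. 0) \<le> 0"
    by (rule opnorm_leI) (auto simp: op_apply_def vnorm_zero)
  then show ?thesis using opnorm_nonneg[of "\<lambda>_ _. 0"] by simp
qed

lemma opnorm_sum: "opnorm L d (\<Sum>i\<in>I. A i) \<le> (\<Sum>i\<in>I. opnorm L d (A i))"
proof (induction I rule: infinite_finite_induct)
  case (infinite I) then show ?case by (simp add: opnorm_zero)
next
  case empty then show ?case by (simp add: opnorm_zero)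
next
  case (insert x F)
  show ?case unfolding sum.insert[OF insert.hyps] using opnorm_add[of "A x" "sum A F"] insert.IH by linarith
qed

lemma opnorm_op_mult: "opnorm L d (op_mult L d A B) \<le> opnorm L d A * opnorm L d B"
proof (rule opnorm_leI)
  show "0 \<le> opnorm L d A * opnorm L d B" by (simp add: opnorm_nonneg)
  fix v
  have "vnorm L d (op_apply L d (op_mult L d A B) v) \<le> opnorm L d A * vnorm L d (op_apply L d B v)"
    unfolding op_apply_mult by (rule vnorm_op_apply_le)
  also have "\<dots> \<le> opnorm L d A * (opnorm L d B * vnorm L d v)"
    by (intro mult_left_mono vnorm_op_apply_le opnorm_nonneg)
  finally show "vnorm L d (op_apply L d (op_mult L d A B) v) \<le> opnorm L d A * opnorm L d B * vnorm L d v"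
    by (simp add: ac_simps)
qed

lemma opnorm_op_comm: "opnorm L d (op_comm L d A B) \<le> 2 * opnorm L d A * opnorm L d B"
  unfolding op_comm_def
  using opnorm_diff[of "op_mult L d A B" "op_mult L d B A"] opnorm_op_mult[of A B] opnorm_op_mult[of B A]
  by (simp add: ac_simps)

lemma norm_entry_le_opnorm:
  assumes "\<sigma> \<in> confs L d" "\<tau> \<in> confs L d"
  shows "cmod (A \<sigma> \<tau>) \<le> opnorm L d A"
proof -
  define v where "v = (\<lambda>\<rho>. if \<rho> = \<tau> then (1::complex) else 0)"
  have "(\<Sum>\<sigma>\<in>confs L d. (cmod (v \<sigma>))\<^sup>2) = (\<Sum>\<sigma>\<in>confs L d. if \<sigma> = \<tau> then 1 else 0)"
    by (rule sum.cong) (auto simp: v_def)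
  also have "\<dots> = 1" using assms finite_confs[OF finite_L] by simp
  finally have "vnorm L d v = 1" unfolding vnorm_def by simp
  have "op_apply L d A v \<sigma> = A \<sigma> \<tau>" unfolding op_apply_def v_def using assms finite_confs[OF finite_L]
    by (simp add: if_distrib sum.delta cong: if_cong)
  then have "cmod (A \<sigma> \<tau>) \<le> vnorm L d (op_apply L d A v)"
    using norm_le_vnorm[OF finite_L assms(1)] by metis
  also have "\<dots> \<le> opnorm L d A" using \<open>vnorm L d v = 1\<close> by (intro vnorm_op_apply_le_opnorm) simp
  finally show ?thesis .
qed

end

section \<open>Measurability of the operator norm\<close>

text \<open>Countably many test vectors suffice to compute \<open>opnorm\<close>, which makes it measurable in time.\<close>

definition rat_complex :: "complex set" where
  "rat_complex = (\<lambda>(a, b). Complex (of_rat a) (of_rat b)) ` UNIV"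

lemma countable_rat_complex: "countable rat_complex"
  unfolding rat_complex_def by simp

lemma zero_in_rat_complex: "0 \<in> rat_complex"
  unfolding rat_complex_def by (auto intro!: image_eqI[of _ _ "(0, 0)"] simp: complex_eq_iff)

lemma rat_complex_dense:
  assumes "0 < e" shows "\<exists>q\<in>rat_complex. cmod (q - z) < e"
proof -
  obtain a where a: "a \<in> \<rat>" "Re z - e/2 < a" "a < Re z + e/2"
    using Rats_dense_in_real[of "Re z - e/2" "Re z + e/2"] assms by auto
  obtain b where b: "b \<in> \<rat>" "Im z - e/2 < b" "b < Im z + e/2"
    using Rats_dense_in_real[of "Im z - e/2" "Im z + e/2"] assms by auto
  have "Complex a b \<in> rat_complex"
    using a(1) b(1) unfolding rat_complex_def by (auto elim!: Rats_cases intro!: image_eqI[of _ _ "(_, _)"])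
  moreover have "cmod (Complex a b - z) < e"
    using cmod_le[of "Complex a b - z"] a b by simp
  ultimately show ?thesis by blast
qed

definition rat_unit_ball :: "'a set \<Rightarrow> ('a \<Rightarrow> nat) \<Rightarrow> (('a \<Rightarrow> nat) \<Rightarrow> complex) set" where
  "rat_unit_ball L d = {v. (\<forall>\<sigma>. \<sigma> \<notin> confs L d \<longrightarrow> v \<sigma> = 0) \<and> (\<forall>\<sigma>\<in>confs L d. v \<sigma> \<in> rat_complex)
      \<and> vnorm L d v \<le> 1}"

context finite_sites
begin

lemma countable_rat_unit_ball: "countable (rat_unit_ball L d)"
proof -
  let ?e = "\<lambda>f \<sigma>. if \<sigma> \<in> confs L d then f \<sigma> else (0::complex)"
  have "rat_unit_ball L d \<subseteq> ?e ` (Pi\<^sub>E (confs L d) (\<lambda>_. rat_complex))"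
  proof
    fix v assume v: "v \<in> rat_unit_ball L d"
    then have "v = ?e (restrict v (confs L d))" unfolding rat_unit_ball_def by (auto simp: fun_eq_iff)
    moreover have "restrict v (confs L d) \<in> Pi\<^sub>E (confs L d) (\<lambda>_. rat_complex)"
      using v unfolding rat_unit_ball_def by auto
    ultimately show "v \<in> ?e ` (Pi\<^sub>E (confs L d) (\<lambda>_. rat_complex))" by blast
  qed
  moreover have "countable (?e ` (Pi\<^sub>E (confs L d) (\<lambda>_. rat_complex)))"
    by (intro countable_image countable_PiE finite_confs[OF finite_L] countable_rat_complex)
  ultimately show ?thesis by (rule countable_subset)
qed

lemma rat_unit_ball_dense:
  assumes v: "vnorm L d v \<le> 1" and \<gamma>: "0 < \<gamma>"
  shows "\<exists>w\<in>rat_unit_ball L d. vnorm L d (\<lambda>\<sigma>. v \<sigma> - w \<sigma>) \<le> \<gamma>"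
proof -
  define \<eta> where "\<eta> = min 1 (\<gamma> / 2)"
  have \<eta>: "0 < \<eta>" "\<eta> \<le> 1" "2 * \<eta> \<le> \<gamma>" unfolding \<eta>_def using \<gamma> by auto
  define c where "c = real (card (confs L d)) + 1"
  have c: "0 < c" "real (card (confs L d)) \<le> c" unfolding c_def by auto
  define v' where "v' = (\<lambda>\<sigma>. complex_of_real (1 - \<eta>) * v \<sigma>)"
  have "\<forall>\<sigma>\<in>confs L d. \<exists>q\<in>rat_complex. cmod (q - v' \<sigma>) < \<eta> / c"
    using rat_complex_dense \<eta> c by auto
  then obtain f where f: "\<And>\<sigma>. \<sigma> \<in> confs L d \<Longrightarrow> f \<sigma> \<in> rat_complex \<and> cmod (f \<sigma> - v' \<sigma>) < \<eta> / c"
    by metis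
  define w where "w = (\<lambda>\<sigma>. if \<sigma> \<in> confs L d then f \<sigma> else 0)"
  have "vnorm L d (\<lambda>\<sigma>. w \<sigma> - v' \<sigma>) \<le> (\<Sum>\<sigma>\<in>confs L d. cmod (w \<sigma> - v' \<sigma>))" by (rule vnorm_le_sum_norm)
  also have "\<dots> \<le> (\<Sum>\<sigma>\<in>confs L d. \<eta> / c)" by (rule sum_mono) (use f in \<open>auto simp: w_def less_imp_le\<close>)
  also have "\<dots> \<le> \<eta>" using c \<eta> by (simp add: divide_le_eq mult.commute mult_left_mono)
  finally have wv': "vnorm L d (\<lambda>\<sigma>. w \<sigma> - v' \<sigma>) \<le> \<eta>" .
  have "cmod (complex_of_real (1 - \<eta>)) = 1 - \<eta>" using \<eta> by (subst norm_of_real) simp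
  then have v': "vnorm L d v' = (1 - \<eta>) * vnorm L d v" unfolding v'_def vnorm_scale by simp
  have vv': "vnorm L d (\<lambda>\<sigma>. v \<sigma> - v' \<sigma>) = \<eta> * vnorm L d v"
    using vnorm_scale[of L d "of_real \<eta>" v] \<eta> unfolding v'_def by (simp add: algebra_simps)
  have "vnorm L d w \<le> vnorm L d v' + vnorm L d (\<lambda>\<sigma>. w \<sigma> - v' \<sigma>)"
    using vnorm_triangle[of L d v' "\<lambda>\<sigma>. w \<sigma> - v' \<sigma>"] by simp
  also have "\<dots> \<le> (1 - \<eta>) * 1 + \<eta>"
    unfolding v' using v \<eta> wv' by (intro add_mono mult_left_mono) auto
  finally have "w \<in> rat_unit_ball L d" unfolding rat_unit_ball_def w_def using f by auto
  moreover have "vnorm L d (\<lambda>\<sigma>. v \<sigma> - w \<sigma>) \<le> \<gamma>"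
  proof -
    have "vnorm L d (\<lambda>\<sigma>. v \<sigma> - w \<sigma>) \<le> vnorm L d (\<lambda>\<sigma>. v \<sigma> - v' \<sigma>) + vnorm L d (\<lambda>\<sigma>. w \<sigma> - v' \<sigma>)"
      using vnorm_triangle[of L d "\<lambda>\<sigma>. v \<sigma> - v' \<sigma>" "\<lambda>\<sigma>. v' \<sigma> - w \<sigma>"]
        vnorm_scale[of L d "-1" "\<lambda>\<sigma>. w \<sigma> - v' \<sigma>"] by simp
    also have "\<dots> \<le> \<eta> * 1 + \<eta>" unfolding vv' using v \<eta> wv' by (intro add_mono mult_left_mono) auto
    finally show ?thesis using \<eta> by simp
  qed
  ultimately show ?thesis by blast
qed

lemma opnorm_eq_SUP_rat_unit_ball:
  "opnorm L d A = (SUP v\<in>rat_unit_ball L d. vnorm L d (op_apply L d A v))"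
proof (rule antisym)
  have ball: "v \<in> rat_unit_ball L d \<Longrightarrow> vnorm L d v \<le> 1" for v unfolding rat_unit_ball_def by simp
  have bdd: "bdd_above ((\<lambda>v. vnorm L d (op_apply L d A v)) ` rat_unit_ball L d)"
    by (rule bdd_aboveI[of _ "opnorm L d A"]) (auto intro!: vnorm_op_apply_le_opnorm ball)
  have "(\<lambda>_. 0) \<in> rat_unit_ball L d"
    unfolding rat_unit_ball_def by (simp add: zero_in_rat_complex vnorm_zero)
  then show "(SUP v\<in>rat_unit_ball L d. vnorm L d (op_apply L d A v)) \<le> opnorm L d A"
    by (intro cSUP_least) (auto intro!: vnorm_op_apply_le_opnorm ball)
  show "opnorm L d A \<le> (SUP v\<in>rat_unit_ball L d. vnorm L d (op_apply L d A v))"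
  proof (rule opnorm_least, rule field_le_epsilon)
    fix v and \<gamma> :: real assume v: "vnorm L d v \<le> 1" and \<gamma>: "0 < \<gamma>"
    define l where "l = op_l1norm L d A + 1"
    have l: "0 < l" unfolding l_def using op_l1norm_nonneg[of L d A] by simp
    obtain w where w: "w \<in> rat_unit_ball L d" "vnorm L d (\<lambda>\<sigma>. v \<sigma> - w \<sigma>) \<le> \<gamma> / l"
      using rat_unit_ball_dense[OF v] \<gamma> l by (meson divide_pos_pos)
    have "v = (\<lambda>\<sigma>. w \<sigma> + (v \<sigma> - w \<sigma>))" by simp
    then have "vnorm L d (op_apply L d A v)
        = vnorm L d (\<lambda>\<sigma>. op_apply L d A w \<sigma> + op_apply L d A (\<lambda>\<sigma>. v \<sigma> - w \<sigma>) \<sigma>)"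
      by (metis (no_types) op_apply_add_right)
    also have "\<dots> \<le> vnorm L d (op_apply L d A w) + op_l1norm L d A * vnorm L d (\<lambda>\<sigma>. v \<sigma> - w \<sigma>)"
      by (rule order_trans[OF vnorm_triangle add_left_mono[OF vnorm_op_apply_le_l1norm]])
    also have "\<dots> \<le> vnorm L d (op_apply L d A w) + l * (\<gamma> / l)"
      using w(2) l op_l1norm_nonneg[of L d A] vnorm_nonneg[of L d]
      unfolding l_def by (intro add_left_mono mult_mono) auto
    also have "\<dots> \<le> (SUP v\<in>rat_unit_ball L d. vnorm L d (op_apply L d A v)) + \<gamma>"
      using l cSUP_upper[OF w(1) bdd] by simp
    finally show "vnorm L d (op_apply L d A v) \<le> (SUP v\<in>rat_unit_ball L d. vnorm L d (op_apply L d A v)) + \<gamma>" .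
  qed
qed

lemma opnorm_measurable:
  assumes "\<And>\<sigma> \<tau>. \<sigma> \<in> confs L d \<Longrightarrow> \<tau> \<in> confs L d \<Longrightarrow> (\<lambda>s. A s \<sigma> \<tau>) \<in> borel_measurable M"
  shows "(\<lambda>s. opnorm L d (A s)) \<in> borel_measurable M"
  unfolding opnorm_eq_SUP_rat_unit_ball
proof (rule borel_measurable_cSUP[OF countable_rat_unit_ball])
  show "(\<lambda>s. vnorm L d (op_apply L d (A s) v)) \<in> borel_measurable M" for v
    unfolding vnorm_def op_apply_def
    by (intro borel_measurable_sum measurable_compose[OF _ borel_measurable_sqrt]
        measurable_compose[OF _ borel_measurable_norm] borel_measurable_power borel_measurable_times
        borel_measurable_const assms)
  show "bdd_above ((\<lambda>v. vnorm L d (op_apply L d (A s) v)) ` rat_unit_ball L d)" for s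
    by (rule bdd_aboveI[of _ "opnorm L d (A s)"])
       (auto simp: rat_unit_ball_def intro!: vnorm_op_apply_le_opnorm)
qed

end

section \<open>Norms of potentials\<close>

definition site_sum :: "'a set \<Rightarrow> ('a \<Rightarrow> nat) \<Rightarrow> real \<Rightarrow> 'a pot \<Rightarrow> 'a \<Rightarrow> real" where
  "site_sum L d \<kappa> Q x = (\<Sum>Z\<in>{Z. Z \<subseteq> L \<and> x \<in> Z}. exp (\<kappa> * real (card Z)) * opnorm L d (Q Z))"

lemma pot_norm_eq_Max_site_sum: "pot_norm L d \<kappa> Q = Max (insert 0 (site_sum L d \<kappa> Q ` L))"
  unfolding pot_norm_def site_sum_def by simp

context finite_sites
begin

lemma finite_subsets_containing: "finite {Z. Z \<subseteq> L \<and> x \<in> Z}"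
  by (rule finite_subset[of _ "Pow L"]) (auto simp: finite_L)

lemma site_sum_eq_sum_Pow:
  "site_sum L d \<kappa> Q x = (\<Sum>Z\<in>Pow L. if x \<in> Z then exp (\<kappa> * real (card Z)) * opnorm L d (Q Z) else 0)"
proof -
  have "site_sum L d \<kappa> Q x = (\<Sum>Z\<in>{Z \<in> Pow L. x \<in> Z}. exp (\<kappa> * real (card Z)) * opnorm L d (Q Z))"
    unfolding site_sum_def by (rule sum.cong) auto
  also have "\<dots> = (\<Sum>Z\<in>Pow L. if x \<in> Z then exp (\<kappa> * real (card Z)) * opnorm L d (Q Z) else 0)"
    by (rule sum.inter_filter) (simp add: finite_L)
  finally show ?thesis .
qed

lemma pot_norm_nonneg: "0 \<le> pot_norm L d \<kappa> Q"
  unfolding pot_norm_eq_Max_site_sum by (rule Max_ge) (auto simp: finite_L)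

lemma site_sum_le_pot_norm: "x \<in> L \<Longrightarrow> site_sum L d \<kappa> Q x \<le> pot_norm L d \<kappa> Q"
  unfolding pot_norm_eq_Max_site_sum by (rule Max_ge) (auto simp: finite_L)

lemma pot_norm_leI:
  "0 \<le> c \<Longrightarrow> (\<And>x. x \<in> L \<Longrightarrow> site_sum L d \<kappa> Q x \<le> c) \<Longrightarrow> pot_norm L d \<kappa> Q \<le> c"
  unfolding pot_norm_eq_Max_site_sum by (subst Max_le_iff) (auto simp: finite_L)

lemma opnorm_le_pot_norm:
  assumes "Z \<subseteq> L" "x \<in> Z" "0 \<le> \<kappa>"
  shows "opnorm L d (Q Z) \<le> pot_norm L d \<kappa> Q"
proof -
  have "opnorm L d (Q Z) \<le> exp (\<kappa> * real (card Z)) * opnorm L d (Q Z)"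
    using assms(3) opnorm_nonneg[of "Q Z"] by (simp add: mult_le_cancel_right1)
  also have "\<dots> \<le> site_sum L d \<kappa> Q x"
    unfolding site_sum_def using assms(1,2) finite_subsets_containing
    by (intro member_le_sum[of Z _ "\<lambda>Z. exp (\<kappa> * real (card Z)) * opnorm L d (Q Z)"])
       (auto simp: opnorm_nonneg)
  also have "\<dots> \<le> pot_norm L d \<kappa> Q" using assms by (intro site_sum_le_pot_norm) auto
  finally show ?thesis .
qed

lemma pot_norm_mono: "\<kappa>1 \<le> \<kappa>2 \<Longrightarrow> pot_norm L d \<kappa>1 Q \<le> pot_norm L d \<kappa>2 Q"
  by (intro pot_norm_leI pot_norm_nonneg order_trans[OF _ site_sum_le_pot_norm])
     (auto simp: site_sum_def intro!: sum_mono mult_right_mono opnorm_nonneg)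

lemma pot_norm_cong:
  assumes "\<And>Z \<sigma> \<tau>. Z \<subseteq> L \<Longrightarrow> Z \<noteq> {} \<Longrightarrow> \<sigma> \<in> confs L d \<Longrightarrow> \<tau> \<in> confs L d \<Longrightarrow> P Z \<sigma> \<tau> = Q Z \<sigma> \<tau>"
  shows "pot_norm L d \<kappa> P = pot_norm L d \<kappa> Q"
proof -
  have "site_sum L d \<kappa> P x = site_sum L d \<kappa> Q x" for x
    unfolding site_sum_def
    by (rule sum.cong) (auto intro!: arg_cong[where f="\<lambda>u. _ * u"] opnorm_cong assms)
  then show ?thesis unfolding pot_norm_eq_Max_site_sum by simp
qed

lemma pot_norm_add: "pot_norm L d \<kappa> (P + Q) \<le> pot_norm L d \<kappa> P + pot_norm L d \<kappa> Q"
proof (rule pot_norm_leI)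
  show "0 \<le> pot_norm L d \<kappa> P + pot_norm L d \<kappa> Q" using pot_norm_nonneg by (simp add: add_nonneg_nonneg)
  fix x assume x: "x \<in> L"
  have "site_sum L d \<kappa> (P + Q) x \<le> site_sum L d \<kappa> P x + site_sum L d \<kappa> Q x"
    unfolding site_sum_def sum.distrib[symmetric] distrib_left[symmetric]
    by (rule sum_mono) (auto intro!: mult_left_mono opnorm_add)
  also have "\<dots> \<le> pot_norm L d \<kappa> P + pot_norm L d \<kappa> Q" using x by (intro add_mono site_sum_le_pot_norm)
  finally show "site_sum L d \<kappa> (P + Q) x \<le> pot_norm L d \<kappa> P + pot_norm L d \<kappa> Q" .
qed

lemma pot_norm_scale_le: "pot_norm L d \<kappa> (\<lambda>Z \<sigma> \<tau>. c * Q Z \<sigma> \<tau>) \<le> cmod c * pot_norm L d \<kappa> Q"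
proof (rule pot_norm_leI)
  show "0 \<le> cmod c * pot_norm L d \<kappa> Q" using pot_norm_nonneg by simp
  fix x assume x: "x \<in> L"
  have "site_sum L d \<kappa> (\<lambda>Z \<sigma> \<tau>. c * Q Z \<sigma> \<tau>) x \<le> cmod c * site_sum L d \<kappa> Q x"
    unfolding site_sum_def sum_distrib_left
    by (rule sum_mono) (auto intro!: mult_left_mono opnorm_scale_le[THEN order_trans] simp: algebra_simps)
  also have "\<dots> \<le> cmod c * pot_norm L d \<kappa> Q" using x by (intro mult_left_mono site_sum_le_pot_norm) auto
  finally show "site_sum L d \<kappa> (\<lambda>Z \<sigma> \<tau>. c * Q Z \<sigma> \<tau>) x \<le> cmod c * pot_norm L d \<kappa> Q" .
qed

lemma pot_norm_zero: "pot_norm L d \<kappa> (\<lambda>_ _ _. 0) = 0"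
proof -
  have "site_sum L d \<kappa> (\<lambda>_ _ _. 0) x = 0" for x
    unfolding site_sum_def using opnorm_zero by simp
  then have "pot_norm L d \<kappa> (\<lambda>_ _ _. 0) \<le> 0" by (intro pot_norm_leI) auto
  then show ?thesis using pot_norm_nonneg[of \<kappa> "\<lambda>_ _ _. 0"] by linarith
qed

lemma pot_norm_sum: "pot_norm L d \<kappa> (\<Sum>i\<in>I. Q i) \<le> (\<Sum>i\<in>I. pot_norm L d \<kappa> (Q i))"
proof (induction I rule: infinite_finite_induct)
  case (insert x F)
  show ?case
    unfolding sum.insert[OF insert.hyps] using pot_norm_add[of \<kappa> "Q x" "sum Q F"] insert.IH by linarith
qed (simp_all add: pot_norm_zero zero_fun_def)

lemma pot_norm_le_sum_l1norm:
  "pot_norm L d \<kappa> Q \<le> (\<Sum>Z\<in>Pow L - {{}}. exp (\<kappa> * real (card Z)) * op_l1norm L d (Q Z))"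
proof (rule pot_norm_leI)
  show "0 \<le> (\<Sum>Z\<in>Pow L - {{}}. exp (\<kappa> * real (card Z)) * op_l1norm L d (Q Z))"
    by (auto intro!: sum_nonneg simp: op_l1norm_nonneg)
  fix x assume "x \<in> L"
  have "site_sum L d \<kappa> Q x \<le> (\<Sum>Z\<in>{Z. Z \<subseteq> L \<and> x \<in> Z}. exp (\<kappa> * real (card Z)) * op_l1norm L d (Q Z))"
    unfolding site_sum_def by (rule sum_mono) (auto intro!: mult_left_mono opnorm_le_l1norm)
  also have "\<dots> \<le> (\<Sum>Z\<in>Pow L - {{}}. exp (\<kappa> * real (card Z)) * op_l1norm L d (Q Z))"
    by (rule sum_mono2) (auto simp: finite_L op_l1norm_nonneg)
  finally show "site_sum L d \<kappa> Q x \<le> (\<Sum>Z\<in>Pow L - {{}}. exp (\<kappa> * real (card Z)) * op_l1norm L d (Q Z))" .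
qed

end

section \<open>The commutator estimate\<close>

lemma exp_card_Un_le:
  assumes "finite Z1" "finite Z2" "Z1 \<inter> Z2 \<noteq> {}" "0 \<le> \<kappa>"
  shows "exp (\<kappa> * real (card (Z1 \<union> Z2))) \<le> exp (- \<kappa>) * exp (\<kappa> * real (card Z1)) * exp (\<kappa> * real (card Z2))"
proof -
  have "1 \<le> card (Z1 \<inter> Z2)" using assms by (simp add: Suc_le_eq card_gt_0_iff)
  moreover have "card Z1 + card Z2 = card (Z1 \<union> Z2) + card (Z1 \<inter> Z2)" using assms(1,2) by (rule card_Un_Int)
  ultimately have "real (card (Z1 \<union> Z2)) \<le> real (card Z1) + real (card Z2) - 1" by linarith
  then have "\<kappa> * real (card (Z1 \<union> Z2)) \<le> \<kappa> * (real (card Z1) + real (card Z2) - 1)"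
    using assms(4) by (rule mult_left_mono)
  then show ?thesis by (simp add: exp_add[symmetric] algebra_simps)
qed

context finite_sites
begin

lemma opnorm_pot_ad_le:
  "opnorm L d (pot_ad L d A B Z)
     \<le> (\<Sum>(Z1, Z2)\<in>{(Z1, Z2). Z1 \<union> Z2 = Z \<and> Z1 \<inter> Z2 \<noteq> {}}. 2 * opnorm L d (A Z1) * opnorm L d (B Z2))"
  unfolding pot_ad_def
  by (rule order_trans[OF opnorm_sum], rule sum_mono) (auto intro: opnorm_op_comm)

lemma sum_containing_pairs_regroup:
  assumes x: "x \<in> L"
  shows "(\<Sum>Z\<in>{Z. Z \<subseteq> L \<and> x \<in> Z}. exp (\<kappa> * real (card Z)) *
           (\<Sum>(Z1, Z2)\<in>{(Z1, Z2). Z1 \<union> Z2 = Z \<and> Z1 \<inter> Z2 \<noteq> {}}. h Z1 Z2))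
       = (\<Sum>Z1\<in>Pow L. \<Sum>Z2\<in>Pow L. if x \<in> Z1 \<union> Z2 \<and> Z1 \<inter> Z2 \<noteq> {}
            then exp (\<kappa> * real (card (Z1 \<union> Z2))) * h Z1 Z2 else 0)"
proof -
  let ?T = "{Z. Z \<subseteq> L \<and> x \<in> Z}"
  let ?S = "{p \<in> Pow L \<times> Pow L. x \<in> fst p \<union> snd p \<and> fst p \<inter> snd p \<noteq> {}}"
  let ?g = "\<lambda>p. exp (\<kappa> * real (card (fst p \<union> snd p))) * h (fst p) (snd p)"
  have fS: "finite ?S" by (rule finite_subset[of _ "Pow L \<times> Pow L"]) (auto simp: finite_L)
  have "exp (\<kappa> * real (card Z)) * (\<Sum>(Z1, Z2)\<in>{(Z1, Z2). Z1 \<union> Z2 = Z \<and> Z1 \<inter> Z2 \<noteq> {}}. h Z1 Z2)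
      = sum ?g {p \<in> ?S. fst p \<union> snd p = Z}" if "Z \<in> ?T" for Z
  proof -
    have "{(Z1, Z2). Z1 \<union> Z2 = Z \<and> Z1 \<inter> Z2 \<noteq> {}} = {p \<in> ?S. fst p \<union> snd p = Z}" using that by auto
    then show ?thesis by (simp add: sum_distrib_left case_prod_unfold)
  qed
  then have "(\<Sum>Z\<in>?T. exp (\<kappa> * real (card Z)) *
           (\<Sum>(Z1, Z2)\<in>{(Z1, Z2). Z1 \<union> Z2 = Z \<and> Z1 \<inter> Z2 \<noteq> {}}. h Z1 Z2)) = (\<Sum>Z\<in>?T. sum ?g {p \<in> ?S. fst p \<union> snd p = Z})"
    by (rule sum.cong[OF refl])
  also have "\<dots> = sum ?g ?S" by (rule sum.group[OF fS finite_subsets_containing]) auto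
  also have "\<dots> = (\<Sum>p\<in>Pow L \<times> Pow L. if x \<in> fst p \<union> snd p \<and> fst p \<inter> snd p \<noteq> {} then ?g p else 0)"
    by (rule sum.inter_filter) (simp add: finite_L)
  also have "\<dots> = (\<Sum>Z1\<in>Pow L. \<Sum>Z2\<in>Pow L. if x \<in> Z1 \<union> Z2 \<and> Z1 \<inter> Z2 \<noteq> {}
            then exp (\<kappa> * real (card (Z1 \<union> Z2))) * h Z1 Z2 else 0)"
    unfolding sum.cartesian_product by (simp add: case_prod_unfold)
  finally show ?thesis .
qed

text \<open>Every \<open>Z2\<close> meeting \<open>Z1\<close> contains one of the \<open>card Z1\<close> sites of \<open>Z1\<close>.\<close>

lemma sum_meeting_le_card_mult_pot_norm:
  assumes Z1: "Z1 \<subseteq> L"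
  shows "(\<Sum>Z2\<in>Pow L. if Z1 \<inter> Z2 \<noteq> {} then exp (\<kappa> * real (card Z2)) * opnorm L d (B Z2) else 0)
    \<le> real (card Z1) * pot_norm L d \<kappa> B"
proof -
  let ?\<beta> = "\<lambda>Z. exp (\<kappa> * real (card Z)) * opnorm L d (B Z)"
  have fZ1: "finite Z1" using Z1 finite_L finite_subset by blast
  have "(\<Sum>Z2\<in>Pow L. if Z1 \<inter> Z2 \<noteq> {} then ?\<beta> Z2 else 0) \<le> (\<Sum>Z2\<in>Pow L. real (card (Z1 \<inter> Z2)) * ?\<beta> Z2)"
  proof (rule sum_mono)
    fix Z2 :: "'a set"
    have "0 \<le> ?\<beta> Z2" by (simp add: opnorm_nonneg)
    moreover have "Z1 \<inter> Z2 \<noteq> {} \<Longrightarrow> 1 \<le> real (card (Z1 \<inter> Z2))"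
      using fZ1 by (simp add: Suc_le_eq card_gt_0_iff)
    ultimately show "(if Z1 \<inter> Z2 \<noteq> {} then ?\<beta> Z2 else 0) \<le> real (card (Z1 \<inter> Z2)) * ?\<beta> Z2"
      by (simp add: mult_le_cancel_right1)
  qed
  also have "\<dots> = (\<Sum>Z2\<in>Pow L. \<Sum>y\<in>Z1. if y \<in> Z2 then ?\<beta> Z2 else 0)"
    using fZ1 by (intro sum.cong) (simp_all add: sum.inter_filter[symmetric] Int_def)
  also have "\<dots> = (\<Sum>y\<in>Z1. \<Sum>Z2\<in>Pow L. if y \<in> Z2 then ?\<beta> Z2 else 0)" by (rule sum.swap)
  also have "\<dots> = (\<Sum>y\<in>Z1. site_sum L d \<kappa> B y)" by (rule sum.cong[OF refl]) (simp add: site_sum_eq_sum_Pow)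
  also have "\<dots> \<le> (\<Sum>y\<in>Z1. pot_norm L d \<kappa> B)" using Z1 by (intro sum_mono site_sum_le_pot_norm) auto
  finally show ?thesis by simp
qed

lemma sum_overlapping_le_pot_norm:
  assumes x: "x \<in> L" and \<kappa>: "\<kappa>1 < \<kappa>2"
  shows "(\<Sum>Z1\<in>Pow L. \<Sum>Z2\<in>Pow L. if x \<in> Z1 \<and> Z1 \<inter> Z2 \<noteq> {} then
            (exp (\<kappa>1 * real (card Z1)) * opnorm L d (A Z1)) * (exp (\<kappa>1 * real (card Z2)) * opnorm L d (B Z2)) else 0)
     \<le> pot_norm L d \<kappa>2 A * pot_norm L d \<kappa>1 B / (exp 1 * (\<kappa>2 - \<kappa>1))"
proof -
  let ?NB = "pot_norm L d \<kappa>1 B" and ?D = "exp 1 * (\<kappa>2 - \<kappa>1)"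
  have NB: "0 \<le> ?NB" by (rule pot_norm_nonneg)
  have "(\<Sum>Z1\<in>Pow L. \<Sum>Z2\<in>Pow L. if x \<in> Z1 \<and> Z1 \<inter> Z2 \<noteq> {} then
            (exp (\<kappa>1 * real (card Z1)) * opnorm L d (A Z1)) * (exp (\<kappa>1 * real (card Z2)) * opnorm L d (B Z2)) else 0)
      = (\<Sum>Z1\<in>Pow L. if x \<in> Z1 then exp (\<kappa>1 * real (card Z1)) * opnorm L d (A Z1) *
           (\<Sum>Z2\<in>Pow L. if Z1 \<inter> Z2 \<noteq> {} then exp (\<kappa>1 * real (card Z2)) * opnorm L d (B Z2) else 0) else 0)"
    by (rule sum.cong) (auto simp: sum_distrib_left intro!: sum.cong)
  also have "\<dots> \<le> (\<Sum>Z1\<in>Pow L. if x \<in> Z1 then exp (\<kappa>1 * real (card Z1)) * real (card Z1) * opnorm L d (A Z1) * ?NB else 0)"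
  proof (rule sum_mono)
    fix Z1 assume "Z1 \<in> Pow L"
    then have inner: "opnorm L d (A Z1) *
           (\<Sum>Z2\<in>Pow L. if Z1 \<inter> Z2 \<noteq> {} then exp (\<kappa>1 * real (card Z2)) * opnorm L d (B Z2) else 0)
        \<le> opnorm L d (A Z1) * (real (card Z1) * ?NB)"
      by (intro mult_left_mono sum_meeting_le_card_mult_pot_norm) (auto simp: opnorm_nonneg)
    show "(if x \<in> Z1 then exp (\<kappa>1 * real (card Z1)) * opnorm L d (A Z1) *
           (\<Sum>Z2\<in>Pow L. if Z1 \<inter> Z2 \<noteq> {} then exp (\<kappa>1 * real (card Z2)) * opnorm L d (B Z2) else 0) else 0)
        \<le> (if x \<in> Z1 then exp (\<kappa>1 * real (card Z1)) * real (card Z1) * opnorm L d (A Z1) * ?NB else 0)"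
      using mult_left_mono[OF inner, of "exp (\<kappa>1 * real (card Z1))"] by (auto simp: ac_simps)
  qed
  also have "\<dots> \<le> (\<Sum>Z1\<in>Pow L. if x \<in> Z1 then exp (\<kappa>2 * real (card Z1)) * opnorm L d (A Z1) * (?NB / ?D) else 0)"
  proof (rule sum_mono)
    fix Z1 :: "'a set"
    have "exp (\<kappa>1 * real (card Z1)) * real (card Z1) * (opnorm L d (A Z1) * ?NB)
        \<le> exp (\<kappa>2 * real (card Z1)) / ?D * (opnorm L d (A Z1) * ?NB)"
      using \<kappa> NB by (intro mult_right_mono exp_mult_le_exp_div_gap) (auto simp: opnorm_nonneg)
    then show "(if x \<in> Z1 then exp (\<kappa>1 * real (card Z1)) * real (card Z1) * opnorm L d (A Z1) * ?NB else 0)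
        \<le> (if x \<in> Z1 then exp (\<kappa>2 * real (card Z1)) * opnorm L d (A Z1) * (?NB / ?D) else 0)"
      by (simp add: ac_simps)
  qed
  also have "\<dots> = site_sum L d \<kappa>2 A x * (?NB / ?D)"
    unfolding site_sum_eq_sum_Pow sum_distrib_right by (rule sum.cong) auto
  also have "\<dots> \<le> pot_norm L d \<kappa>2 A * (?NB / ?D)"
    using x \<kappa> NB by (intro mult_right_mono site_sum_le_pot_norm) auto
  finally show ?thesis by simp
qed

lemma pot_norm_pot_ad_le:
  assumes \<kappa>1: "0 \<le> \<kappa>1" and \<kappa>: "\<kappa>1 < \<kappa>2"
  shows "pot_norm L d \<kappa>1 (pot_ad L d A B)
    \<le> 4 * exp (- \<kappa>1) / (exp 1 * (\<kappa>2 - \<kappa>1)) * pot_norm L d \<kappa>2 A * pot_norm L d \<kappa>2 B"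
proof (rule pot_norm_leI)
  let ?D = "exp 1 * (\<kappa>2 - \<kappa>1)" and ?e = "2 * exp (- \<kappa>1)"
  define \<alpha> where "\<alpha> Z = exp (\<kappa>1 * real (card Z)) * opnorm L d (A Z)" for Z
  define \<beta> where "\<beta> Z = exp (\<kappa>1 * real (card Z)) * opnorm L d (B Z)" for Z
  have nonneg: "0 \<le> opnorm L d (A Z)" "0 \<le> opnorm L d (B Z)" "0 \<le> \<alpha> Z" "0 \<le> \<beta> Z" for Z
    by (simp_all add: \<alpha>_def \<beta>_def opnorm_nonneg)
  have N: "0 \<le> pot_norm L d \<kappa>2 A" "0 \<le> pot_norm L d \<kappa>2 B" by (simp_all add: pot_norm_nonneg)
  show "0 \<le> 4 * exp (- \<kappa>1) / ?D * pot_norm L d \<kappa>2 A * pot_norm L d \<kappa>2 B" using \<kappa> N by simp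
  fix x assume x: "x \<in> L"
  define S1 where "S1 = (\<Sum>Z1\<in>Pow L. \<Sum>Z2\<in>Pow L. if x \<in> Z1 \<and> Z1 \<inter> Z2 \<noteq> {} then \<alpha> Z1 * \<beta> Z2 else 0)"
  define S2 where "S2 = (\<Sum>Z2\<in>Pow L. \<Sum>Z1\<in>Pow L. if x \<in> Z2 \<and> Z2 \<inter> Z1 \<noteq> {} then \<beta> Z2 * \<alpha> Z1 else 0)"
  have "site_sum L d \<kappa>1 (pot_ad L d A B) x \<le> (\<Sum>Z\<in>{Z. Z \<subseteq> L \<and> x \<in> Z}. exp (\<kappa>1 * real (card Z)) *
      (\<Sum>(Z1, Z2)\<in>{(Z1, Z2). Z1 \<union> Z2 = Z \<and> Z1 \<inter> Z2 \<noteq> {}}. 2 * opnorm L d (A Z1) * opnorm L d (B Z2)))"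
    unfolding site_sum_def by (intro sum_mono mult_left_mono opnorm_pot_ad_le) auto
  also have "\<dots> = (\<Sum>Z1\<in>Pow L. \<Sum>Z2\<in>Pow L. if x \<in> Z1 \<union> Z2 \<and> Z1 \<inter> Z2 \<noteq> {}
      then exp (\<kappa>1 * real (card (Z1 \<union> Z2))) * (2 * opnorm L d (A Z1) * opnorm L d (B Z2)) else 0)"
    by (rule sum_containing_pairs_regroup[OF x])
  also have "\<dots> \<le> (\<Sum>Z1\<in>Pow L. \<Sum>Z2\<in>Pow L. ?e * ((if x \<in> Z1 \<and> Z1 \<inter> Z2 \<noteq> {} then \<alpha> Z1 * \<beta> Z2 else 0)
      + (if x \<in> Z2 \<and> Z2 \<inter> Z1 \<noteq> {} then \<beta> Z2 * \<alpha> Z1 else 0)))"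
  proof (intro sum_mono)
    fix Z1 Z2 assume Z: "Z1 \<in> Pow L" "Z2 \<in> Pow L"
    show "(if x \<in> Z1 \<union> Z2 \<and> Z1 \<inter> Z2 \<noteq> {}
        then exp (\<kappa>1 * real (card (Z1 \<union> Z2))) * (2 * opnorm L d (A Z1) * opnorm L d (B Z2)) else 0)
      \<le> ?e * ((if x \<in> Z1 \<and> Z1 \<inter> Z2 \<noteq> {} then \<alpha> Z1 * \<beta> Z2 else 0)
        + (if x \<in> Z2 \<and> Z2 \<inter> Z1 \<noteq> {} then \<beta> Z2 * \<alpha> Z1 else 0))"
    proof (cases "x \<in> Z1 \<union> Z2 \<and> Z1 \<inter> Z2 \<noteq> {}")
      case True
      have "finite Z1" "finite Z2" using Z finite_L finite_subset by auto
      then have "exp (\<kappa>1 * real (card (Z1 \<union> Z2))) * (2 * opnorm L d (A Z1) * opnorm L d (B Z2))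
          \<le> (exp (- \<kappa>1) * exp (\<kappa>1 * real (card Z1)) * exp (\<kappa>1 * real (card Z2))) * (2 * opnorm L d (A Z1) * opnorm L d (B Z2))"
        using True \<kappa>1 nonneg by (intro mult_right_mono exp_card_Un_le) auto
      also have "\<dots> = ?e * (\<alpha> Z1 * \<beta> Z2)" unfolding \<alpha>_def \<beta>_def by (simp add: ac_simps)
      also have "\<dots> \<le> ?e * ((if x \<in> Z1 \<and> Z1 \<inter> Z2 \<noteq> {} then \<alpha> Z1 * \<beta> Z2 else 0)
          + (if x \<in> Z2 \<and> Z2 \<inter> Z1 \<noteq> {} then \<beta> Z2 * \<alpha> Z1 else 0))"
        using True nonneg by (intro mult_left_mono) (auto simp: Int_commute mult.commute)
      finally show ?thesis using True by simp
    qed (auto simp: Int_commute)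
  qed
  also have "\<dots> = ?e * (S1 + S2)"
  proof -
    have "(\<Sum>Z1\<in>Pow L. \<Sum>Z2\<in>Pow L. if x \<in> Z2 \<and> Z2 \<inter> Z1 \<noteq> {} then \<beta> Z2 * \<alpha> Z1 else 0) = S2"
      unfolding S2_def by (rule sum.swap)
    then show ?thesis
      unfolding S1_def by (simp only: sum_distrib_left[symmetric] sum.distrib distrib_left)
  qed
  also have "\<dots> \<le> ?e * (pot_norm L d \<kappa>2 A * pot_norm L d \<kappa>1 B / ?D + pot_norm L d \<kappa>2 B * pot_norm L d \<kappa>1 A / ?D)"
    unfolding S1_def S2_def \<alpha>_def \<beta>_def
    by (intro mult_left_mono add_mono sum_overlapping_le_pot_norm[OF x \<kappa>]) simp
  also have "\<dots> \<le> ?e * (pot_norm L d \<kappa>2 A * pot_norm L d \<kappa>2 B / ?D + pot_norm L d \<kappa>2 B * pot_norm L d \<kappa>2 A / ?D)"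
    using \<kappa> N by (intro mult_left_mono add_mono divide_right_mono pot_norm_mono) auto
  also have "\<dots> = 4 * exp (- \<kappa>1) / ?D * pot_norm L d \<kappa>2 A * pot_norm L d \<kappa>2 B" by (simp add: field_simps)
  finally show "site_sum L d \<kappa>1 (pot_ad L d A B) x \<le> 4 * exp (- \<kappa>1) / ?D * pot_norm L d \<kappa>2 A * pot_norm L d \<kappa>2 B" .
qed

end

definition bounded_measurable_tpot :: "'a set \<Rightarrow> ('a \<Rightarrow> nat) \<Rightarrow> real \<Rightarrow> (real \<Rightarrow> 'a pot) \<Rightarrow> bool" where
  "bounded_measurable_tpot L d t Q \<longleftrightarrow>
     (\<forall>Z \<sigma> \<tau>. Z \<subseteq> L \<longrightarrow> \<sigma> \<in> confs L d \<longrightarrow> \<tau> \<in> confs L d \<longrightarrow> bounded_measurable t (\<lambda>s. Q s Z \<sigma> \<tau>))"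

lemma bounded_measurable_tpotD:
  "bounded_measurable_tpot L d t Q \<Longrightarrow> Z \<subseteq> L \<Longrightarrow> \<sigma> \<in> confs L d \<Longrightarrow> \<tau> \<in> confs L d
    \<Longrightarrow> bounded_measurable t (\<lambda>s. Q s Z \<sigma> \<tau>)"
  unfolding bounded_measurable_tpot_def by auto

lemma regular_tpot_imp_bounded_measurable_tpot:
  "regular_tpot L d t \<Phi> \<Longrightarrow> bounded_measurable_tpot L d t \<Phi>"
  unfolding regular_tpot_def bounded_measurable_tpot_def bounded_measurable_def bounded_iff by auto

lemma bounded_measurable_tpot_subinterval:
  "bounded_measurable_tpot L d t Q \<Longrightarrow> u \<le> t \<Longrightarrow> bounded_measurable_tpot L d u Q"
  unfolding bounded_measurable_tpot_def by (blast intro: bounded_measurable_subinterval)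

lemma bounded_measurable_tpot_add:
  "bounded_measurable_tpot L d t P \<Longrightarrow> bounded_measurable_tpot L d t Q
    \<Longrightarrow> bounded_measurable_tpot L d t (\<lambda>s. P s + Q s)"
  unfolding bounded_measurable_tpot_def by (auto intro: bounded_measurable_add)

lemma bounded_measurable_tpot_diff:
  "bounded_measurable_tpot L d t P \<Longrightarrow> bounded_measurable_tpot L d t Q
    \<Longrightarrow> bounded_measurable_tpot L d t (\<lambda>s. P s - Q s)"
  unfolding bounded_measurable_tpot_def by (auto intro: bounded_measurable_diff)

lemma pot_ad_apply:
  "pot_ad L d P Q Z \<sigma> \<tau> = (\<Sum>p\<in>{(Z1, Z2). Z1 \<union> Z2 = Z \<and> Z1 \<inter> Z2 \<noteq> {}}.
      (\<Sum>\<rho>\<in>confs L d. P (fst p) \<sigma> \<rho> * Q (snd p) \<rho> \<tau>) - (\<Sum>\<rho>\<in>confs L d. Q (snd p) \<sigma> \<rho> * P (fst p) \<rho> \<tau>))"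
  unfolding pot_ad_def sum_apply op_comm_def op_mult_def by (simp add: case_prod_unfold)

lemma pot_ad_diff:
  "pot_ad L d P Q Z \<sigma> \<tau> - pot_ad L d P' Q' Z \<sigma> \<tau> = pot_ad L d (P - P') Q Z \<sigma> \<tau> + pot_ad L d P' (Q - Q') Z \<sigma> \<tau>"
  unfolding pot_ad_apply minus_apply
  by (simp add: sum_subtractf[symmetric] sum.distrib[symmetric] algebra_simps)

context finite_sites
begin

lemma bounded_measurable_tpot_pot_ad:
  assumes P: "bounded_measurable_tpot L d t P" and Q: "bounded_measurable_tpot L d t Q"
  shows "bounded_measurable_tpot L d t (\<lambda>s. pot_ad L d (P s) (Q s))"
  unfolding bounded_measurable_tpot_def pot_ad_apply
proof (intro allI impI bounded_measurable_sum bounded_measurable_diff bounded_measurable_mult)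
  fix Z \<sigma> \<tau> p \<rho>
  assume "Z \<subseteq> L" "\<sigma> \<in> confs L d" "\<tau> \<in> confs L d" "\<rho> \<in> confs L d"
    and "p \<in> {(Z1, Z2). Z1 \<union> Z2 = Z \<and> Z1 \<inter> Z2 \<noteq> {}}"
  then have "fst p \<subseteq> L" "snd p \<subseteq> L" "\<sigma> \<in> confs L d" "\<tau> \<in> confs L d" "\<rho> \<in> confs L d" by auto
  then show "bounded_measurable t (\<lambda>s. P s (fst p) \<sigma> \<rho>)" "bounded_measurable t (\<lambda>s. Q s (snd p) \<rho> \<tau>)"
       "bounded_measurable t (\<lambda>s. Q s (snd p) \<sigma> \<rho>)" "bounded_measurable t (\<lambda>s. P s (fst p) \<rho> \<tau>)"
    using bounded_measurable_tpotD[OF P] bounded_measurable_tpotD[OF Q] by auto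
qed

lemma bounded_measurable_opnorm:
  assumes "\<And>\<sigma> \<tau>. \<sigma> \<in> confs L d \<Longrightarrow> \<tau> \<in> confs L d \<Longrightarrow> bounded_measurable t (\<lambda>s. A s \<sigma> \<tau>)"
  shows "bounded_measurable t (\<lambda>s. opnorm L d (A s))"
proof (rule bounded_measurable_dominated)
  show "(\<lambda>s. opnorm L d (A s)) \<in> borel_measurable (lebesgue_on {0..t})"
    using assms by (intro opnorm_measurable) (auto simp: bounded_measurable_def)
  show "bounded_measurable t (\<lambda>s. op_l1norm L d (A s))"
    unfolding op_l1norm_def by (intro bounded_measurable_sum bounded_measurable_norm assms)
qed (simp add: opnorm_nonneg opnorm_le_l1norm)

lemma bounded_measurable_pot_norm:
  assumes Q: "bounded_measurable_tpot L d t Q"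
  shows "bounded_measurable t (\<lambda>s. pot_norm L d \<kappa> (Q s))"
proof -
  have site: "bounded_measurable t (\<lambda>s. site_sum L d \<kappa> (Q s) x)" for x
    unfolding site_sum_def
    by (intro bounded_measurable_sum bounded_measurable_mult bounded_measurable_const bounded_measurable_opnorm
        bounded_measurable_tpotD[OF Q]) auto
  define f where "f i s = (case i of None \<Rightarrow> 0 | Some x \<Rightarrow> site_sum L d \<kappa> (Q s) x)" for i s
  have eq: "pot_norm L d \<kappa> (Q s) = Max ((\<lambda>i. f i s) ` insert None (Some ` L))" for s
    unfolding pot_norm_eq_Max_site_sum f_def by (simp add: image_image)
  have "(\<lambda>s. pot_norm L d \<kappa> (Q s)) \<in> borel_measurable (lebesgue_on {0..t})"
    unfolding eq using site finite_L
    by (intro borel_measurable_Max) (auto simp: f_def bounded_measurable_def split: option.split)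
  moreover have "bounded_measurable t (\<lambda>s. \<Sum>Z\<in>Pow L - {{}}. exp (\<kappa> * real (card Z)) * op_l1norm L d (Q s Z))"
    unfolding op_l1norm_def
    by (intro bounded_measurable_sum bounded_measurable_mult bounded_measurable_const bounded_measurable_norm
        bounded_measurable_tpotD[OF Q]) auto
  ultimately show ?thesis
    by (rule bounded_measurable_dominated) (simp add: pot_norm_nonneg pot_norm_le_sum_l1norm)
qed


lemma opnorm_integral_le:
  assumes A: "\<And>\<sigma> \<tau>. \<sigma> \<in> confs L d \<Longrightarrow> \<tau> \<in> confs L d \<Longrightarrow> bounded_measurable t (\<lambda>s. A s \<sigma> \<tau>)"
  shows "opnorm L d (\<lambda>\<sigma> \<tau>. integral {0..t} (\<lambda>s. A s \<sigma> \<tau>)) \<le> integral {0..t} (\<lambda>s. opnorm L d (A s))"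
proof (rule opnorm_least)
  have intA: "(\<lambda>s. A s \<sigma> \<tau>) integrable_on {0..t}" if "\<sigma> \<in> confs L d" "\<tau> \<in> confs L d" for \<sigma> \<tau>
    using bounded_measurable_integrable[OF A[OF that]] .
  have intN: "(\<lambda>s. opnorm L d (A s)) integrable_on {0..t}"
    by (rule bounded_measurable_integrable[OF bounded_measurable_opnorm[OF A]])
  fix v assume v: "vnorm L d v \<le> 1"
  define y where "y = op_apply L d (\<lambda>\<sigma> \<tau>. integral {0..t} (\<lambda>s. A s \<sigma> \<tau>)) v"
  define h where "h s = op_apply L d (A s) v" for s
  have inth: "(\<lambda>s. h s \<sigma>) integrable_on {0..t}" if "\<sigma> \<in> confs L d" for \<sigma>
    unfolding h_def op_apply_def
    by (intro integrable_sum finite_confs[OF finite_L] integrable_on_mult_left intA that)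
  have y: "y \<sigma> = integral {0..t} (\<lambda>s. h s \<sigma>)" if "\<sigma> \<in> confs L d" for \<sigma>
    unfolding y_def h_def op_apply_def
    by (subst Henstock_Kurzweil_Integration.integral_sum)
       (auto intro!: finite_confs[OF finite_L] integrable_on_mult_left intA that)
  txt \<open>Pair \<open>y\<close> with itself: \<open>\<parallel>y\<parallel>\<^sup>2 = \<integral> \<langle>y, A s v\<rangle> ds \<le> \<parallel>y\<parallel> \<integral> \<parallel>A s\<parallel> ds\<close>.\<close>
  have "(vnorm L d y)^2 = cmod (\<Sum>\<sigma>\<in>confs L d. cnj (y \<sigma>) * y \<sigma>)"
    by (simp add: sum_cnj_mult_self norm_power)
  also have "(\<Sum>\<sigma>\<in>confs L d. cnj (y \<sigma>) * y \<sigma>) = integral {0..t} (\<lambda>s. \<Sum>\<sigma>\<in>confs L d. cnj (y \<sigma>) * h s \<sigma>)"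
    by (subst Henstock_Kurzweil_Integration.integral_sum)
       (auto intro!: finite_confs[OF finite_L] integrable_on_mult_right inth sum.cong simp: y)
  also have "cmod \<dots> \<le> integral {0..t} (\<lambda>s. vnorm L d y * opnorm L d (A s))"
  proof (rule integral_norm_bound_integral)
    show "(\<lambda>s. \<Sum>\<sigma>\<in>confs L d. cnj (y \<sigma>) * h s \<sigma>) integrable_on {0..t}"
      by (intro integrable_sum finite_confs[OF finite_L] integrable_on_mult_right inth)
    show "(\<lambda>s. vnorm L d y * opnorm L d (A s)) integrable_on {0..t}"
      by (intro integrable_on_mult_right intN)
    fix s
    have "cmod (\<Sum>\<sigma>\<in>confs L d. cnj (y \<sigma>) * h s \<sigma>) \<le> vnorm L d y * vnorm L d (h s)"
      by (rule norm_sum_cnj_mult_le)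
    also have "\<dots> \<le> vnorm L d y * (opnorm L d (A s) * vnorm L d v)"
      unfolding h_def by (intro mult_left_mono vnorm_op_apply_le vnorm_nonneg)
    also have "\<dots> \<le> vnorm L d y * opnorm L d (A s)"
      using v by (intro mult_left_mono vnorm_nonneg mult_left_le opnorm_nonneg vnorm_nonneg)
    finally show "norm (\<Sum>\<sigma>\<in>confs L d. cnj (y \<sigma>) * h s \<sigma>) \<le> vnorm L d y * opnorm L d (A s)" by simp
  qed
  also have "\<dots> = vnorm L d y * integral {0..t} (\<lambda>s. opnorm L d (A s))" by simp
  finally have "(vnorm L d y)^2 \<le> vnorm L d y * integral {0..t} (\<lambda>s. opnorm L d (A s))" .
  moreover have "0 \<le> integral {0..t} (\<lambda>s. opnorm L d (A s))"
    by (rule integral_nonneg[OF intN]) (simp add: opnorm_nonneg)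
  ultimately show "vnorm L d (op_apply L d (\<lambda>\<sigma> \<tau>. integral {0..t} (\<lambda>s. A s \<sigma> \<tau>)) v) \<le> integral {0..t} (\<lambda>s. opnorm L d (A s))"
    unfolding y_def[symmetric] using vnorm_nonneg[of L d y]
    by (cases "vnorm L d y = 0") (auto simp: power2_eq_square mult_le_cancel_left)
qed

lemma pot_norm_integral_le:
  assumes Q: "bounded_measurable_tpot L d t Q"
  shows "pot_norm L d \<kappa> (\<lambda>Z \<sigma> \<tau>. integral {0..t} (\<lambda>s. Q s Z \<sigma> \<tau>)) \<le> integral {0..t} (\<lambda>s. pot_norm L d \<kappa> (Q s))"
proof (rule pot_norm_leI)
  have intP: "(\<lambda>s. pot_norm L d \<kappa> (Q s)) integrable_on {0..t}"
    by (rule bounded_measurable_integrable[OF bounded_measurable_pot_norm[OF Q]])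
  show "0 \<le> integral {0..t} (\<lambda>s. pot_norm L d \<kappa> (Q s))"
    by (rule integral_nonneg[OF intP]) (simp add: pot_norm_nonneg)
  fix x assume x: "x \<in> L"
  have intO: "(\<lambda>s. opnorm L d (Q s Z)) integrable_on {0..t}" if "Z \<subseteq> L" for Z
    using that by (intro bounded_measurable_integrable bounded_measurable_opnorm bounded_measurable_tpotD[OF Q])
  have "site_sum L d \<kappa> (\<lambda>Z \<sigma> \<tau>. integral {0..t} (\<lambda>s. Q s Z \<sigma> \<tau>)) x
     \<le> (\<Sum>Z\<in>{Z. Z \<subseteq> L \<and> x \<in> Z}. exp (\<kappa> * real (card Z)) * integral {0..t} (\<lambda>s. opnorm L d (Q s Z)))"
    unfolding site_sum_def
    by (intro sum_mono mult_left_mono opnorm_integral_le bounded_measurable_tpotD[OF Q]) auto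
  also have "\<dots> = integral {0..t} (\<lambda>s. site_sum L d \<kappa> (Q s) x)"
    unfolding site_sum_def
    by (subst Henstock_Kurzweil_Integration.integral_sum)
       (auto intro!: finite_subsets_containing integrable_on_mult_right intO)
  also have "\<dots> \<le> integral {0..t} (\<lambda>s. pot_norm L d \<kappa> (Q s))"
    using x unfolding site_sum_def
    by (intro integral_le intP integrable_sum finite_subsets_containing integrable_on_mult_right intO
        order_trans[OF _ site_sum_le_pot_norm]) (auto simp: site_sum_def)
  finally show "site_sum L d \<kappa> (\<lambda>Z \<sigma> \<tau>. integral {0..t} (\<lambda>s. Q s Z \<sigma> \<tau>)) x
      \<le> integral {0..t} (\<lambda>s. pot_norm L d \<kappa> (Q s))" .
qed

lemma bounded_measurable_tpot_dyson_term:
  assumes \<Psi>: "bounded_measurable_tpot L d t \<Psi>"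
  shows "bounded_measurable_tpot L d t (\<lambda>s. dyson_term L d \<Psi> \<Theta> n s)"
  unfolding bounded_measurable_tpot_def
proof (induction n)
  case 0 then show ?case by (simp add: bounded_measurable_const)
next
  case (Suc n)
  then have *: "bounded_measurable_tpot L d t (\<lambda>s. pot_ad L d (\<Psi> s) (dyson_term L d \<Psi> \<Theta> n s))"
    by (intro bounded_measurable_tpot_pot_ad[OF \<Psi>]) (simp add: bounded_measurable_tpot_def)
  show ?case
  proof (intro allI impI bounded_measurable_continuous)
    fix Z \<sigma> \<tau> assume "Z \<subseteq> L" "\<sigma> \<in> confs L d" "\<tau> \<in> confs L d"
    then show "continuous_on {0..t} (\<lambda>s. dyson_term L d \<Psi> \<Theta> (Suc n) s Z \<sigma> \<tau>)"
      unfolding dyson_term.simps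
      by (intro indefinite_integral_continuous_1 bounded_measurable_integrable bounded_measurable_tpotD[OF *])
  qed
qed

lemma pot_norm_pot_ad_le_gap:
  assumes "0 \<le> \<kappa>0" "\<kappa>0 \<le> \<kappa>1" "0 < \<epsilon>"
  shows "pot_norm L d \<kappa>1 (pot_ad L d A B)
    \<le> 4 * exp (- \<kappa>0) / (exp 1 * \<epsilon>) * pot_norm L d (\<kappa>1 + \<epsilon>) A * pot_norm L d (\<kappa>1 + \<epsilon>) B"
proof -
  have "pot_norm L d \<kappa>1 (pot_ad L d A B)
      \<le> 4 * exp (- \<kappa>1) / (exp 1 * (\<kappa>1 + \<epsilon> - \<kappa>1)) * pot_norm L d (\<kappa>1 + \<epsilon>) A * pot_norm L d (\<kappa>1 + \<epsilon>) B"
    using assms by (intro pot_norm_pot_ad_le) auto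
  also have "\<dots> \<le> 4 * exp (- \<kappa>0) / (exp 1 * \<epsilon>) * pot_norm L d (\<kappa>1 + \<epsilon>) A * pot_norm L d (\<kappa>1 + \<epsilon>) B"
    using assms by (intro mult_right_mono pot_norm_nonneg) (simp_all add: divide_right_mono)
  finally show ?thesis .
qed

section \<open>Dyson terms\<close>

text \<open>Each \<open>ad\<close> in the \<open>k\<close>-th Dyson term is estimated by the commutator bound at the cost of a
  decay rate \<open>\<epsilon>\<close>; the iterated time integrals produce the factor \<open>1 / k!\<close>.\<close>

lemma pot_norm_dyson_term_le:
  assumes "bounded_measurable_tpot L d t \<Psi>" "0 \<le> t" and \<epsilon>: "0 < \<epsilon>"
    and \<kappa>0: "0 \<le> \<kappa>0" "\<kappa>0 \<le> \<kappa> - real k * \<epsilon>"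
  shows "pot_norm L d (\<kappa> - real k * \<epsilon>) (dyson_term L d \<Psi> \<Theta> k t)
    \<le> (4 * exp (- \<kappa>0) / (exp 1 * \<epsilon>) * integral {0..t} (\<lambda>s. pot_norm L d \<kappa> (\<Psi> s))) ^ k / fact k
       * pot_norm L d \<kappa> \<Theta>"
  using assms(1,2) \<kappa>0(2)
proof (induction k arbitrary: t)
  case 0 then show ?case by simp
next
  case (Suc k)
  define c where "c = 4 * exp (- \<kappa>0) / (exp 1 * \<epsilon>)"
  define f where "f s = pot_norm L d \<kappa> (\<Psi> s)" for s
  define N where "N = pot_norm L d \<kappa> \<Theta>"
  have c0: "0 \<le> c" using \<epsilon> by (simp add: c_def)
  have f0: "0 \<le> f s" for s by (simp add: f_def pot_norm_nonneg)
  have N0: "0 \<le> N" by (simp add: N_def pot_norm_nonneg)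
  have f: "bounded_measurable t f" unfolding f_def by (rule bounded_measurable_pot_norm[OF Suc.prems(1)])
  have lev: "\<kappa>0 \<le> \<kappa> - real k * \<epsilon>" "\<kappa>0 \<le> \<kappa> - real (Suc k) * \<epsilon>"
    using Suc.prems(3) \<epsilon> by (simp_all add: algebra_simps)
  have gap: "\<kappa> - real (Suc k) * \<epsilon> + \<epsilon> = \<kappa> - real k * \<epsilon>" by (simp add: algebra_simps)
  let ?D = "\<lambda>s. dyson_term L d \<Psi> \<Theta> k s"
  have ad: "bounded_measurable_tpot L d t (\<lambda>s. pot_ad L d (\<Psi> s) (?D s))"
    by (intro bounded_measurable_tpot_pot_ad bounded_measurable_tpot_dyson_term Suc.prems(1))
  have "continuous_on {0..t} (\<lambda>s. integral {0..s} f)"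
    by (rule indefinite_integral_continuous_1[OF bounded_measurable_integrable[OF f]])
  then have fF: "bounded_measurable t (\<lambda>s. f s * (0 + integral {0..s} f) ^ k)"
    by (intro bounded_measurable_mult[OF f] bounded_measurable_continuous continuous_intros)
  have "pot_norm L d (\<kappa> - real (Suc k) * \<epsilon>) (dyson_term L d \<Psi> \<Theta> (Suc k) t)
      \<le> integral {0..t} (\<lambda>s. pot_norm L d (\<kappa> - real (Suc k) * \<epsilon>) (pot_ad L d (\<Psi> s) (?D s)))"
    unfolding dyson_term.simps by (rule pot_norm_integral_le[OF ad])
  also have "\<dots> \<le> integral {0..t} (\<lambda>s. c ^ Suc k * N / fact k * (f s * (0 + integral {0..s} f) ^ k))"
  proof (rule integral_le)
    show "(\<lambda>s. pot_norm L d (\<kappa> - real (Suc k) * \<epsilon>) (pot_ad L d (\<Psi> s) (?D s))) integrable_on {0..t}"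
      by (intro bounded_measurable_integrable bounded_measurable_pot_norm[OF ad])
    show "(\<lambda>s. c ^ Suc k * N / fact k * (f s * (0 + integral {0..s} f) ^ k)) integrable_on {0..t}"
      by (intro integrable_on_mult_right bounded_measurable_integrable fF)
    fix s assume s: "s \<in> {0..t}"
    have "pot_norm L d (\<kappa> - real (Suc k) * \<epsilon>) (pot_ad L d (\<Psi> s) (?D s))
        \<le> c * pot_norm L d (\<kappa> - real k * \<epsilon>) (\<Psi> s) * pot_norm L d (\<kappa> - real k * \<epsilon>) (?D s)"
      using pot_norm_pot_ad_le_gap[OF \<kappa>0(1) lev(2) \<epsilon>] unfolding gap c_def .
    also have "\<dots> \<le> c * f s * ((c * integral {0..s} f) ^ k / fact k * N)"
    proof (intro mult_mono mult_left_mono)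
      show "pot_norm L d (\<kappa> - real k * \<epsilon>) (\<Psi> s) \<le> f s"
        unfolding f_def using \<epsilon> by (intro pot_norm_mono) simp
      show "pot_norm L d (\<kappa> - real k * \<epsilon>) (?D s) \<le> (c * integral {0..s} f) ^ k / fact k * N"
        using Suc.IH[OF bounded_measurable_tpot_subinterval[OF Suc.prems(1)] _ lev(1)] s
        unfolding c_def f_def N_def by simp
    qed (auto simp: c0 f0 pot_norm_nonneg)
    also have "\<dots> = c ^ Suc k * N / fact k * (f s * (0 + integral {0..s} f) ^ k)"
      by (simp add: power_mult_distrib)
    finally show "pot_norm L d (\<kappa> - real (Suc k) * \<epsilon>) (pot_ad L d (\<Psi> s) (?D s))
        \<le> c ^ Suc k * N / fact k * (f s * (0 + integral {0..s} f) ^ k)" .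
  qed
  also have "\<dots> = c ^ Suc k * N / fact k * integral {0..t} (\<lambda>s. f s * (0 + integral {0..s} f) ^ k)"
    by simp
  also have "\<dots> \<le> c ^ Suc k * N / fact k * (((0 + integral {0..t} f) ^ Suc k - 0 ^ Suc k) / real (Suc k))"
    using Suc.prems(2) c0 N0 f0 by (intro mult_left_mono integral_mult_power_integral_le f) auto
  also have "\<dots> = (c * integral {0..t} f) ^ Suc k / fact (Suc k) * N"
    by (simp add: power_mult_distrib field_simps)
  finally show ?case unfolding c_def f_def N_def .
qed

lemma dyson_term_Suc_diff_apply:
  assumes \<Phi>: "bounded_measurable_tpot L d t \<Phi>" and \<Phi>': "bounded_measurable_tpot L d t \<Phi>'"
    and Z: "Z \<subseteq> L" "\<sigma> \<in> confs L d" "\<tau> \<in> confs L d"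
  shows "(dyson_term L d \<Phi> \<Theta> (Suc k) t - dyson_term L d \<Phi>' \<Theta> (Suc k) t) Z \<sigma> \<tau>
    = integral {0..t} (\<lambda>s. (pot_ad L d (\<Phi> s - \<Phi>' s) (dyson_term L d \<Phi> \<Theta> k s)
        + pot_ad L d (\<Phi>' s) (dyson_term L d \<Phi> \<Theta> k s - dyson_term L d \<Phi>' \<Theta> k s)) Z \<sigma> \<tau>)"
proof -
  have "(\<lambda>s. pot_ad L d (\<Psi> s) (dyson_term L d \<Psi> \<Theta> k s) Z \<sigma> \<tau>) integrable_on {0..t}"
    if "bounded_measurable_tpot L d t \<Psi>" for \<Psi>
    by (intro bounded_measurable_integrable bounded_measurable_tpotD[OF _ Z] bounded_measurable_tpot_pot_ad
        bounded_measurable_tpot_dyson_term that)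
  then have i: "(\<lambda>s. pot_ad L d (\<Phi> s) (dyson_term L d \<Phi> \<Theta> k s) Z \<sigma> \<tau>) integrable_on {0..t}"
      "(\<lambda>s. pot_ad L d (\<Phi>' s) (dyson_term L d \<Phi>' \<Theta> k s) Z \<sigma> \<tau>) integrable_on {0..t}"
    using \<Phi> \<Phi>' by blast+
  have "(dyson_term L d \<Phi> \<Theta> (Suc k) t - dyson_term L d \<Phi>' \<Theta> (Suc k) t) Z \<sigma> \<tau>
      = integral {0..t} (\<lambda>s. pot_ad L d (\<Phi> s) (dyson_term L d \<Phi> \<Theta> k s) Z \<sigma> \<tau>
          - pot_ad L d (\<Phi>' s) (dyson_term L d \<Phi>' \<Theta> k s) Z \<sigma> \<tau>)"
    by (simp add: Henstock_Kurzweil_Integration.integral_diff[OF i])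
  then show ?thesis by (simp only: pot_ad_diff plus_fun_apply)
qed

lemma pot_norm_dyson_term_diff_Suc_le:
  assumes \<Phi>: "bounded_measurable_tpot L d t \<Phi>" and \<Phi>': "bounded_measurable_tpot L d t \<Phi>'"
    and \<epsilon>: "0 < \<epsilon>" and \<kappa>0: "0 \<le> \<kappa>0" "\<kappa>0 \<le> \<kappa> - real (Suc k) * \<epsilon>"
  defines "c \<equiv> 4 * exp (- \<kappa>0) / (exp 1 * \<epsilon>)"
  shows "pot_norm L d (\<kappa> - real (Suc k) * \<epsilon>) (dyson_term L d \<Phi> \<Theta> (Suc k) t - dyson_term L d \<Phi>' \<Theta> (Suc k) t)
    \<le> integral {0..t} (\<lambda>s. c * pot_norm L d \<kappa> (\<Phi> s - \<Phi>' s) * pot_norm L d (\<kappa> - real k * \<epsilon>) (dyson_term L d \<Phi> \<Theta> k s)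
        + c * pot_norm L d \<kappa> (\<Phi>' s) * pot_norm L d (\<kappa> - real k * \<epsilon>) (dyson_term L d \<Phi> \<Theta> k s - dyson_term L d \<Phi>' \<Theta> k s))"
proof -
  let ?l = "\<kappa> - real (Suc k) * \<epsilon>" and ?l' = "\<kappa> - real k * \<epsilon>"
  have gap: "?l + \<epsilon> = ?l'" by (simp add: algebra_simps)
  let ?D = "\<lambda>s. dyson_term L d \<Phi> \<Theta> k s" and ?D' = "\<lambda>s. dyson_term L d \<Phi>' \<Theta> k s"
  define R where "R s = pot_ad L d (\<Phi> s - \<Phi>' s) (?D s) + pot_ad L d (\<Phi>' s) (?D s - ?D' s)" for s
  have D: "bounded_measurable_tpot L d t ?D" "bounded_measurable_tpot L d t ?D'"
    using \<Phi> \<Phi>' by (simp_all add: bounded_measurable_tpot_dyson_term)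
  have R: "bounded_measurable_tpot L d t R" unfolding R_def
    by (intro bounded_measurable_tpot_add bounded_measurable_tpot_pot_ad bounded_measurable_tpot_diff D \<Phi> \<Phi>')
  have norms: "bounded_measurable t (\<lambda>s. pot_norm L d \<kappa>' (Q s))" if "bounded_measurable_tpot L d t Q" for \<kappa>' Q
    using bounded_measurable_pot_norm[OF that] .
  have "pot_norm L d ?l (dyson_term L d \<Phi> \<Theta> (Suc k) t - dyson_term L d \<Phi>' \<Theta> (Suc k) t)
      = pot_norm L d ?l (\<lambda>Z \<sigma> \<tau>. integral {0..t} (\<lambda>s. R s Z \<sigma> \<tau>))"
    unfolding R_def by (intro pot_norm_cong dyson_term_Suc_diff_apply \<Phi> \<Phi>')
  also have "\<dots> \<le> integral {0..t} (\<lambda>s. pot_norm L d ?l (R s))"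
    by (rule pot_norm_integral_le[OF R])
  also have "\<dots> \<le> integral {0..t} (\<lambda>s. c * pot_norm L d \<kappa> (\<Phi> s - \<Phi>' s) * pot_norm L d ?l' (?D s)
        + c * pot_norm L d \<kappa> (\<Phi>' s) * pot_norm L d ?l' (?D s - ?D' s))"
  proof (rule integral_le)
    show "(\<lambda>s. pot_norm L d ?l (R s)) integrable_on {0..t}"
      by (intro bounded_measurable_integrable norms R)
    show "(\<lambda>s. c * pot_norm L d \<kappa> (\<Phi> s - \<Phi>' s) * pot_norm L d ?l' (?D s)
        + c * pot_norm L d \<kappa> (\<Phi>' s) * pot_norm L d ?l' (?D s - ?D' s)) integrable_on {0..t}"
      by (intro bounded_measurable_integrable bounded_measurable_add bounded_measurable_mult bounded_measurable_const
          norms bounded_measurable_tpot_diff D \<Phi> \<Phi>')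
    fix s
    have c0: "0 \<le> c" using \<epsilon> by (simp add: c_def)
    have "pot_norm L d ?l (R s) \<le> pot_norm L d ?l (pot_ad L d (\<Phi> s - \<Phi>' s) (?D s))
        + pot_norm L d ?l (pot_ad L d (\<Phi>' s) (?D s - ?D' s))"
      unfolding R_def by (rule pot_norm_add)
    also have "\<dots> \<le> c * pot_norm L d ?l' (\<Phi> s - \<Phi>' s) * pot_norm L d ?l' (?D s)
        + c * pot_norm L d ?l' (\<Phi>' s) * pot_norm L d ?l' (?D s - ?D' s)"
      unfolding c_def gap[symmetric] by (intro add_mono pot_norm_pot_ad_le_gap[OF \<kappa>0 \<epsilon>])
    also have "\<dots> \<le> c * pot_norm L d \<kappa> (\<Phi> s - \<Phi>' s) * pot_norm L d ?l' (?D s)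
        + c * pot_norm L d \<kappa> (\<Phi>' s) * pot_norm L d ?l' (?D s - ?D' s)"
      using \<epsilon> c0
      by (intro add_mono mult_right_mono mult_left_mono pot_norm_mono pot_norm_nonneg) auto
    finally show "pot_norm L d ?l (R s) \<le> c * pot_norm L d \<kappa> (\<Phi> s - \<Phi>' s) * pot_norm L d ?l' (?D s)
        + c * pot_norm L d \<kappa> (\<Phi>' s) * pot_norm L d ?l' (?D s - ?D' s)" .
  qed
  finally show ?thesis .
qed

lemma pot_norm_dyson_term_diff_Suc_le_majorant:
  fixes \<Theta> :: "'a pot"
  assumes \<Phi>: "bounded_measurable_tpot L d t \<Phi>" "bounded_measurable_tpot L d t \<Phi>'" "0 \<le> t"
    and \<epsilon>: "0 < \<epsilon>" and \<kappa>0: "0 \<le> \<kappa>0" "\<kappa>0 \<le> \<kappa> - real (Suc k) * \<epsilon>"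
  defines "c \<equiv> 4 * exp (- \<kappa>0) / (exp 1 * \<epsilon>)"
    and "N \<equiv> pot_norm L d \<kappa> \<Theta>"
    and "f \<equiv> \<lambda>s. pot_norm L d \<kappa> (\<Phi> s)" and "f' \<equiv> \<lambda>s. pot_norm L d \<kappa> (\<Phi>' s)"
    and "g \<equiv> \<lambda>s. pot_norm L d \<kappa> (\<Phi> s - \<Phi>' s)"
  shows "pot_norm L d (\<kappa> - real (Suc k) * \<epsilon>) (dyson_term L d \<Phi> \<Theta> (Suc k) t - dyson_term L d \<Phi>' \<Theta> (Suc k) t)
    \<le> integral {0..t} (\<lambda>s. (c * integral {0..t} f) ^ k / fact k * N * c * g s
        + c * f' s * pot_norm L d (\<kappa> - real k * \<epsilon>) (dyson_term L d \<Phi> \<Theta> k s - dyson_term L d \<Phi>' \<Theta> k s))"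
proof -
  let ?l = "\<kappa> - real k * \<epsilon>"
  let ?D = "\<lambda>s. dyson_term L d \<Phi> \<Theta> k s" and ?D' = "\<lambda>s. dyson_term L d \<Phi>' \<Theta> k s"
  have c0: "0 \<le> c" and N0: "0 \<le> N" using \<epsilon> by (simp_all add: c_def N_def pot_norm_nonneg)
  have lev: "\<kappa>0 \<le> ?l" using \<kappa>0(2) \<epsilon> by (simp add: algebra_simps)
  have f: "bounded_measurable t f" unfolding f_def by (rule bounded_measurable_pot_norm[OF \<Phi>(1)])
  have "pot_norm L d (\<kappa> - real (Suc k) * \<epsilon>) (dyson_term L d \<Phi> \<Theta> (Suc k) t - dyson_term L d \<Phi>' \<Theta> (Suc k) t)
      \<le> integral {0..t} (\<lambda>s. c * g s * pot_norm L d ?l (?D s) + c * f' s * pot_norm L d ?l (?D s - ?D' s))"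
    using pot_norm_dyson_term_diff_Suc_le[OF \<Phi>(1,2) \<epsilon> \<kappa>0] by (simp add: c_def g_def f'_def)
  also have "\<dots> \<le> integral {0..t} (\<lambda>s. (c * integral {0..t} f) ^ k / fact k * N * c * g s
      + c * f' s * pot_norm L d ?l (?D s - ?D' s))"
  proof (rule integral_le)
    have bm: "bounded_measurable t (\<lambda>s. pot_norm L d \<kappa>' (Q s))" if "bounded_measurable_tpot L d t Q" for \<kappa>' Q
      using bounded_measurable_pot_norm[OF that] .
    show "(\<lambda>s. c * g s * pot_norm L d ?l (?D s) + c * f' s * pot_norm L d ?l (?D s - ?D' s)) integrable_on {0..t}"
      "(\<lambda>s. (c * integral {0..t} f) ^ k / fact k * N * c * g s + c * f' s * pot_norm L d ?l (?D s - ?D' s))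
        integrable_on {0..t}"
      unfolding g_def f'_def
      by (intro bounded_measurable_integrable bounded_measurable_add bounded_measurable_mult
          bounded_measurable_const bm bounded_measurable_tpot_diff bounded_measurable_tpot_dyson_term \<Phi>)+
    fix s assume s: "s \<in> {0..t}"
    then have "pot_norm L d ?l (?D s) \<le> (c * integral {0..s} f) ^ k / fact k * N"
      using pot_norm_dyson_term_le[OF bounded_measurable_tpot_subinterval[OF \<Phi>(1)] _ \<epsilon> \<kappa>0(1) lev]
      unfolding c_def f_def N_def by simp
    also have "\<dots> \<le> (c * integral {0..t} f) ^ k / fact k * N"
      using s c0 N0 f f_def
      by (intro mult_right_mono divide_right_mono power_mono mult_left_mono integral_mono_bounded_measurable[OF f]
          mult_nonneg_nonneg integral_nonneg_bounded_measurable[OF f]) (auto simp: pot_norm_nonneg)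
    finally have "c * g s * pot_norm L d ?l (?D s) \<le> c * g s * ((c * integral {0..t} f) ^ k / fact k * N)"
      using c0 by (intro mult_left_mono) (auto simp: g_def pot_norm_nonneg)
    then show "c * g s * pot_norm L d ?l (?D s) + c * f' s * pot_norm L d ?l (?D s - ?D' s)
        \<le> (c * integral {0..t} f) ^ k / fact k * N * c * g s + c * f' s * pot_norm L d ?l (?D s - ?D' s)"
      by (simp add: mult_ac)
  qed
  finally show ?thesis .
qed

lemma pot_norm_dyson_term_diff_le:
  fixes \<Theta> :: "'a pot"
  assumes "bounded_measurable_tpot L d t \<Phi>" "bounded_measurable_tpot L d t \<Phi>'" "0 \<le> t"
    and \<epsilon>: "0 < \<epsilon>" and \<kappa>0: "0 \<le> \<kappa>0" "\<kappa>0 \<le> \<kappa> - real (Suc k) * \<epsilon>"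
  defines "c \<equiv> 4 * exp (- \<kappa>0) / (exp 1 * \<epsilon>)"
    and "N \<equiv> pot_norm L d \<kappa> \<Theta>"
    and "f \<equiv> \<lambda>s. pot_norm L d \<kappa> (\<Phi> s)" and "f' \<equiv> \<lambda>s. pot_norm L d \<kappa> (\<Phi>' s)"
    and "g \<equiv> \<lambda>s. pot_norm L d \<kappa> (\<Phi> s - \<Phi>' s)"
  shows "pot_norm L d (\<kappa> - real (Suc k) * \<epsilon>) (dyson_term L d \<Phi> \<Theta> (Suc k) t - dyson_term L d \<Phi>' \<Theta> (Suc k) t)
    \<le> c ^ Suc k * N * integral {0..t} g * (integral {0..t} f + integral {0..t} f') ^ k / fact k"
  using assms(1-3) \<kappa>0(2)
proof (induction k arbitrary: t)
  case 0
  have "pot_norm L d (\<kappa> - real (Suc 0) * \<epsilon>) (dyson_term L d \<Phi> \<Theta> (Suc 0) t - dyson_term L d \<Phi>' \<Theta> (Suc 0) t)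
      \<le> integral {0..t} (\<lambda>s. (c * integral {0..t} f) ^ 0 / fact 0 * N * c * g s
        + c * f' s * pot_norm L d (\<kappa> - real 0 * \<epsilon>) (dyson_term L d \<Phi> \<Theta> 0 s - dyson_term L d \<Phi>' \<Theta> 0 s))"
    unfolding c_def N_def f_def f'_def g_def
    by (rule pot_norm_dyson_term_diff_Suc_le_majorant[OF "0.prems"(1-3) \<epsilon> \<kappa>0(1) "0.prems"(4)])
  also have "\<dots> = c ^ Suc 0 * N * integral {0..t} g * (integral {0..t} f + integral {0..t} f') ^ 0 / fact 0"
    by (simp add: pot_norm_zero[folded zero_fun_def] mult_ac)
  finally show ?case .
next
  case (Suc j)
  let ?k = "Suc j"
  let ?E = "\<lambda>s. pot_norm L d (\<kappa> - real ?k * \<epsilon>) (dyson_term L d \<Phi> \<Theta> ?k s - dyson_term L d \<Phi>' \<Theta> ?k s)"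
  define F where "F s = integral {0..s} f" for s
  define F' where "F' s = integral {0..s} f'" for s
  define G where "G s = integral {0..s} g" for s
  define K where "K = c ^ Suc ?k * N * G t / fact j"
  have c0: "0 \<le> c" and N0: "0 \<le> N" using \<epsilon> by (simp_all add: c_def N_def pot_norm_nonneg)
  have lev: "\<kappa>0 \<le> \<kappa> - real ?k * \<epsilon>" using Suc.prems(4) \<epsilon> by (simp add: algebra_simps)
  have f: "bounded_measurable t f" "bounded_measurable t f'" "bounded_measurable t g"
    unfolding f_def f'_def g_def
    by (intro bounded_measurable_pot_norm bounded_measurable_tpot_diff Suc.prems(1,2))+
  have mono: "F s \<le> F t" "G s \<le> G t" and nonneg: "0 \<le> F s" "0 \<le> F' s" "0 \<le> G s" "0 \<le> f' s"
    if "s \<in> {0..t}" for s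
    using that f unfolding F_def F'_def G_def f_def f'_def g_def
    by (auto intro: integral_mono_bounded_measurable integral_nonneg_bounded_measurable simp: pot_norm_nonneg)
  have "pot_norm L d (\<kappa> - real (Suc ?k) * \<epsilon>) (dyson_term L d \<Phi> \<Theta> (Suc ?k) t - dyson_term L d \<Phi>' \<Theta> (Suc ?k) t)
      \<le> integral {0..t} (\<lambda>s. (c * F t) ^ ?k / fact ?k * N * c * g s + c * f' s * ?E s)"
    unfolding c_def N_def f_def f'_def g_def F_def
    by (rule pot_norm_dyson_term_diff_Suc_le_majorant[OF Suc.prems(1-3) \<epsilon> \<kappa>0(1) Suc.prems(4)])
  also have "\<dots> \<le> integral {0..t} (\<lambda>s. (c * F t) ^ ?k / fact ?k * N * c * g s + K * (f' s * (F t + F' s) ^ j))"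
  proof (rule integral_le)
    show "(\<lambda>s. (c * F t) ^ ?k / fact ?k * N * c * g s + c * f' s * ?E s) integrable_on {0..t}"
      unfolding g_def f'_def
      by (intro bounded_measurable_integrable bounded_measurable_add bounded_measurable_mult bounded_measurable_const
          bounded_measurable_pot_norm bounded_measurable_tpot_diff bounded_measurable_tpot_dyson_term Suc.prems(1,2))
    have "continuous_on {0..t} F'"
      unfolding F'_def by (rule indefinite_integral_continuous_1[OF bounded_measurable_integrable[OF f(2)]])
    then show "(\<lambda>s. (c * F t) ^ ?k / fact ?k * N * c * g s + K * (f' s * (F t + F' s) ^ j)) integrable_on {0..t}"
      by (intro bounded_measurable_integrable bounded_measurable_add bounded_measurable_mult bounded_measurable_const
          f bounded_measurable_continuous continuous_intros)
    fix s assume s: "s \<in> {0..t}"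
    then have s0: "0 \<le> s" and st: "s \<le> t" by auto
    have "?E s \<le> c ^ ?k * N * G s * (F s + F' s) ^ j / fact j"
      using Suc.IH[OF bounded_measurable_tpot_subinterval[OF Suc.prems(1) st]
          bounded_measurable_tpot_subinterval[OF Suc.prems(2) st] s0 lev]
      unfolding F_def F'_def G_def .
    also have "\<dots> \<le> c ^ ?k * N * G t * (F t + F' s) ^ j / fact j"
      using mono[OF s] nonneg[OF s] nonneg[of t] Suc.prems(3) c0 N0
      by (intro divide_right_mono mult_mono mult_left_mono power_mono add_right_mono) auto
    finally have "c * f' s * ?E s \<le> c * f' s * (c ^ ?k * N * G t * (F t + F' s) ^ j / fact j)"
      using c0 nonneg[OF s] by (intro mult_left_mono) auto
    also have "\<dots> = K * (f' s * (F t + F' s) ^ j)" by (simp add: K_def mult_ac)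
    finally show "(c * F t) ^ ?k / fact ?k * N * c * g s + c * f' s * ?E s
      \<le> (c * F t) ^ ?k / fact ?k * N * c * g s + K * (f' s * (F t + F' s) ^ j)" by (rule add_left_mono)
  qed
  also have "\<dots> \<le> (c * F t) ^ ?k / fact ?k * N * c * G t + K * (((F t + F' t) ^ ?k - F t ^ ?k) / real ?k)"
    unfolding G_def F'_def
    using f c0 N0 nonneg Suc.prems(3) by (intro integral_add_mult_power_integral_le) (auto simp: K_def)
  also have "\<dots> = c ^ Suc ?k * N * G t / fact ?k * (F t ^ ?k + ((F t + F' t) ^ ?k - F t ^ ?k))"
    unfolding K_def by (simp add: field_simps power_mult_distrib del: of_nat_Suc)
  also have "\<dots> = c ^ Suc ?k * N * G t * (F t + F' t) ^ ?k / fact ?k" by simp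
  finally show ?case unfolding F_def F'_def G_def .
qed

section \<open>The Dyson series\<close>

lemma pot_norm_le_suminf:
  fixes Q :: "nat \<Rightarrow> 'a pot" and S :: "'a pot"
  assumes sums: "\<And>Z \<sigma> \<tau>. Z \<subseteq> L \<Longrightarrow> Z \<noteq> {} \<Longrightarrow> \<sigma> \<in> confs L d \<Longrightarrow> \<tau> \<in> confs L d
      \<Longrightarrow> (\<lambda>n. Q n Z \<sigma> \<tau>) sums S Z \<sigma> \<tau>"
    and summable: "summable (\<lambda>n. pot_norm L d \<kappa> (Q n))"
  shows "pot_norm L d \<kappa> S \<le> (\<Sum>n. pot_norm L d \<kappa> (Q n))"
proof -
  define R where "R m = S - (\<Sum>n<m. Q n)" for m
  have bound: "pot_norm L d \<kappa> S \<le> (\<Sum>n. pot_norm L d \<kappa> (Q n)) + pot_norm L d \<kappa> (R m)" for m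
  proof -
    have "pot_norm L d \<kappa> S \<le> pot_norm L d \<kappa> (\<Sum>n<m. Q n) + pot_norm L d \<kappa> (R m)"
      using pot_norm_add[of \<kappa> "\<Sum>n<m. Q n" "R m"] by (simp add: R_def)
    also have "pot_norm L d \<kappa> (\<Sum>n<m. Q n) \<le> (\<Sum>n<m. pot_norm L d \<kappa> (Q n))" by (rule pot_norm_sum)
    also have "\<dots> \<le> (\<Sum>n. pot_norm L d \<kappa> (Q n))"
      by (rule sum_le_suminf[OF summable]) (auto simp: pot_norm_nonneg)
    finally show ?thesis by simp
  qed
  txt \<open>The remainders tend to zero entrywise, hence in the (finite-dimensional) weighted \<open>\<ell>\<^sup>1\<close> norm.\<close>
  have "(\<lambda>m. cmod (R m Z \<sigma> \<tau>)) \<longlonglongrightarrow> 0"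
    if "Z \<in> Pow L - {{}}" "\<sigma> \<in> confs L d" "\<tau> \<in> confs L d" for Z \<sigma> \<tau>
  proof -
    have "(\<lambda>m. \<Sum>n<m. Q n Z \<sigma> \<tau>) \<longlonglongrightarrow> S Z \<sigma> \<tau>" using sums[of Z \<sigma> \<tau>] that by (auto simp: sums_def)
    then have "(\<lambda>m. S Z \<sigma> \<tau> - (\<Sum>n<m. Q n Z \<sigma> \<tau>)) \<longlonglongrightarrow> 0"
      using tendsto_diff[OF tendsto_const[of "S Z \<sigma> \<tau>"]] by fastforce
    then show ?thesis unfolding R_def by (simp add: sum_apply tendsto_norm_zero)
  qed
  then have "(\<lambda>m. \<Sum>Z\<in>Pow L - {{}}. exp (\<kappa> * real (card Z)) * op_l1norm L d (R m Z)) \<longlonglongrightarrow>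
      (\<Sum>Z\<in>Pow L - {{}}. exp (\<kappa> * real (card Z)) * (\<Sum>\<sigma>\<in>confs L d. \<Sum>\<tau>\<in>confs L d. 0))"
    unfolding op_l1norm_def by (intro tendsto_sum tendsto_mult_left) auto
  then have "(\<lambda>m. \<Sum>Z\<in>Pow L - {{}}. exp (\<kappa> * real (card Z)) * op_l1norm L d (R m Z)) \<longlonglongrightarrow> 0" by simp
  then have "(\<lambda>m. (\<Sum>n. pot_norm L d \<kappa> (Q n))
      + (\<Sum>Z\<in>Pow L - {{}}. exp (\<kappa> * real (card Z)) * op_l1norm L d (R m Z))) \<longlonglongrightarrow> (\<Sum>n. pot_norm L d \<kappa> (Q n)) + 0"
    by (intro tendsto_add tendsto_const)
  moreover have "pot_norm L d \<kappa> S \<le> (\<Sum>n. pot_norm L d \<kappa> (Q n))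
      + (\<Sum>Z\<in>Pow L - {{}}. exp (\<kappa> * real (card Z)) * op_l1norm L d (R m Z))" for m
    using bound[of m] pot_norm_le_sum_l1norm[of \<kappa> "R m"] by linarith
  ultimately show ?thesis by (intro tendsto_lowerbound) (auto simp: eventually_sequentially)
qed

text \<open>Spending the gap \<open>\<kappa> - \<kappa>'\<close> in \<open>n\<close> equal steps turns \<open>n\<^sup>n / n!\<close> into at most \<open>e\<^sup>n\<close>.\<close>

lemma pot_norm_dyson_term_le_geometric:
  assumes \<Psi>: "bounded_measurable_tpot L d t \<Psi>" "0 \<le> t" and \<kappa>': "0 \<le> \<kappa>'" "\<kappa>' < \<kappa>"
    and small: "12 * integral {0..t} (\<lambda>s. pot_norm L d \<kappa> (\<Psi> s)) \<le> \<kappa> - \<kappa>'"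
  shows "pot_norm L d \<kappa>' (dyson_term L d \<Psi> \<Theta> n t) \<le> pot_norm L d \<kappa> \<Theta> * (1/3) ^ n"
proof (cases "n = 0")
  case True then show ?thesis using pot_norm_mono[of \<kappa>' \<kappa> \<Theta>] \<kappa>' by simp
next
  case False
  define X where "X = integral {0..t} (\<lambda>s. pot_norm L d \<kappa> (\<Psi> s))"
  define a where "a = 4 * exp (- \<kappa>') * X / (\<kappa> - \<kappa>')"
  define \<epsilon> where "\<epsilon> = (\<kappa> - \<kappa>') / n"
  have \<epsilon>: "0 < \<epsilon>" and lev: "\<kappa> - real n * \<epsilon> = \<kappa>'" using False \<kappa>' by (simp_all add: \<epsilon>_def)
  have X0: "0 \<le> X"
    unfolding X_def using \<Psi> by (intro integral_nonneg_bounded_measurable bounded_measurable_pot_norm)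
      (auto simp: pot_norm_nonneg)
  have a: "0 \<le> a" "a \<le> 1/3"
  proof -
    show "0 \<le> a" using X0 \<kappa>' by (simp add: a_def)
    have "exp (- \<kappa>') * X \<le> X" using X0 \<kappa>' by (intro mult_left_le_one_le) auto
    then have "4 * exp (- \<kappa>') * X \<le> 4 * X" by simp
    then show "a \<le> 1/3" using small \<kappa>' unfolding a_def X_def by (simp add: divide_le_eq)
  qed
  have "pot_norm L d \<kappa>' (dyson_term L d \<Psi> \<Theta> n t)
      \<le> (4 * exp (- \<kappa>') / (exp 1 * \<epsilon>) * X) ^ n / fact n * pot_norm L d \<kappa> \<Theta>"
    using pot_norm_dyson_term_le[OF \<Psi> \<epsilon> \<kappa>'(1), of \<kappa> n \<Theta>] lev unfolding X_def by simp
  also have "(4 * exp (- \<kappa>') / (exp 1 * \<epsilon>) * X) ^ n / fact n = a ^ n * (real n ^ n / fact n) / exp (real n)"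
  proof -
    have "4 * exp (- \<kappa>') / (exp 1 * \<epsilon>) * X = a * real n / exp 1"
      using False \<kappa>' by (simp add: a_def \<epsilon>_def field_simps)
    moreover have "exp (real n) = exp 1 ^ n" using exp_of_nat_mult[of n 1] by simp
    ultimately show ?thesis by (simp add: power_mult_distrib power_divide)
  qed
  also have "\<dots> \<le> a ^ n"
  proof -
    have le1: "real n ^ n / fact n / exp (real n) \<le> 1" using power_div_fact_le_exp[of "real n" n] by (simp add: divide_le_eq mult.commute)
    show ?thesis using mult_left_le[OF le1, of "a ^ n"] a by simp
  qed
  also have "\<dots> \<le> (1/3) ^ n" using a by (intro power_mono)
  finally show ?thesis using pot_norm_nonneg[of \<kappa> \<Theta>] by (simp add: mult_right_mono mult.commute)
qed

lemma pot_norm_dyson_term_diff_le_geometric: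
  assumes \<Phi>: "bounded_measurable_tpot L d t \<Phi>" "bounded_measurable_tpot L d t \<Phi>'" "0 \<le> t"
    and \<kappa>': "0 \<le> \<kappa>'" "\<kappa>' < \<kappa>"
    and small: "6 * (integral {0..t} (\<lambda>s. pot_norm L d \<kappa> (\<Phi> s)) + integral {0..t} (\<lambda>s. pot_norm L d \<kappa> (\<Phi>' s)))
      \<le> \<kappa> - \<kappa>'"
  shows "pot_norm L d \<kappa>' (dyson_term L d \<Phi> \<Theta> (Suc k) t - dyson_term L d \<Phi>' \<Theta> (Suc k) t)
    \<le> 4 * exp (- \<kappa>') / (\<kappa> - \<kappa>') * pot_norm L d \<kappa> \<Theta> * integral {0..t} (\<lambda>s. pot_norm L d \<kappa> (\<Phi> s - \<Phi>' s))
      * (real (Suc k) * (2/3) ^ k)"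
proof -
  define S where "S = integral {0..t} (\<lambda>s. pot_norm L d \<kappa> (\<Phi> s)) + integral {0..t} (\<lambda>s. pot_norm L d \<kappa> (\<Phi>' s))"
  define G where "G = integral {0..t} (\<lambda>s. pot_norm L d \<kappa> (\<Phi> s - \<Phi>' s))"
  define N where "N = pot_norm L d \<kappa> \<Theta>"
  define b where "b = 4 * exp (- \<kappa>') / (\<kappa> - \<kappa>')"
  define x where "x = real (Suc k)"
  define \<epsilon> where "\<epsilon> = (\<kappa> - \<kappa>') / x"
  have x: "0 < x" by (simp add: x_def)
  have \<epsilon>: "0 < \<epsilon>" and lev: "\<kappa> - real (Suc k) * \<epsilon> = \<kappa>'" using \<kappa>' x by (simp_all add: \<epsilon>_def x_def)
  have nonneg: "0 \<le> integral {0..t} (\<lambda>s. pot_norm L d \<kappa> (\<Psi> s))" if "bounded_measurable_tpot L d t \<Psi>" for \<Psi>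
    using that \<Phi>(3)
    by (intro integral_nonneg_bounded_measurable bounded_measurable_pot_norm) (auto simp: pot_norm_nonneg)
  have S0: "0 \<le> S" and G0: "0 \<le> G" and N0: "0 \<le> N" and b0: "0 \<le> b"
    using nonneg[OF \<Phi>(1)] nonneg[OF \<Phi>(2)] nonneg[OF bounded_measurable_tpot_diff[OF \<Phi>(1,2)]] \<kappa>'
    by (simp_all add: S_def G_def N_def b_def pot_norm_nonneg)
  have bS: "b * S \<le> 2/3"
  proof -
    have "exp (- \<kappa>') * S \<le> S" using S0 \<kappa>' by (intro mult_left_le_one_le) auto
    then show ?thesis using small \<kappa>' unfolding b_def S_def by (simp add: divide_le_eq)
  qed
  have "pot_norm L d \<kappa>' (dyson_term L d \<Phi> \<Theta> (Suc k) t - dyson_term L d \<Phi>' \<Theta> (Suc k) t)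
      \<le> (4 * exp (- \<kappa>') / (exp 1 * \<epsilon>)) ^ Suc k * N * G * S ^ k / fact k"
    using pot_norm_dyson_term_diff_le[OF \<Phi> \<epsilon> \<kappa>'(1), of \<kappa> k \<Theta>] lev
    unfolding S_def G_def N_def by simp
  also have "\<dots> = b * N * G * x * (b * S) ^ k * (x ^ Suc k / fact (Suc k) / exp x)"
  proof -
    have c: "4 * exp (- \<kappa>') / (exp 1 * \<epsilon>) = b * x / exp 1"
      using \<kappa>' x by (simp add: b_def \<epsilon>_def field_simps)
    have e: "exp x = exp 1 ^ Suc k" using exp_of_nat_mult[of "Suc k" 1] by (simp add: x_def)
    have f: "fact (Suc k) = x * fact k" by (simp add: x_def)
    show ?thesis unfolding c e f using x by (simp add: power_mult_distrib power_divide field_simps)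
  qed
  also have "\<dots> \<le> b * N * G * x * (2/3) ^ k * 1"
  proof (intro mult_mono power_mono)
    show "x ^ Suc k / fact (Suc k) / exp x \<le> 1"
      using power_div_fact_le_exp[of x "Suc k"] x by (simp add: divide_le_eq mult.commute)
  qed (use b0 N0 G0 x S0 bS in auto)
  finally show ?thesis by (simp add: b_def G_def N_def x_def)
qed

lemma dyson_series_sums:
  assumes \<Psi>: "bounded_measurable_tpot L d t \<Psi>" "0 \<le> t" and \<kappa>': "0 \<le> \<kappa>'" "\<kappa>' < \<kappa>"
    and small: "12 * integral {0..t} (\<lambda>s. pot_norm L d \<kappa> (\<Psi> s)) \<le> \<kappa> - \<kappa>'"
    and Z: "Z \<subseteq> L" "Z \<noteq> {}" "\<sigma> \<in> confs L d" "\<tau> \<in> confs L d"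
  shows "(\<lambda>n. \<i> ^ n * dyson_term L d \<Psi> \<Theta> n t Z \<sigma> \<tau>) sums evol L d \<Psi> t \<Theta> Z \<sigma> \<tau>"
proof -
  obtain x where x: "x \<in> Z" using Z(2) by blast
  have bound: "norm (\<i> ^ n * dyson_term L d \<Psi> \<Theta> n t Z \<sigma> \<tau>) \<le> pot_norm L d \<kappa> \<Theta> * (1/3) ^ n" for n
  proof -
    have "norm (\<i> ^ n * dyson_term L d \<Psi> \<Theta> n t Z \<sigma> \<tau>) \<le> opnorm L d (dyson_term L d \<Psi> \<Theta> n t Z)"
      using norm_entry_le_opnorm[OF Z(3,4)] by (simp add: norm_mult norm_power)
    also have "\<dots> \<le> pot_norm L d \<kappa>' (dyson_term L d \<Psi> \<Theta> n t)" by (rule opnorm_le_pot_norm[OF Z(1) x \<kappa>'(1)])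
    also have "\<dots> \<le> pot_norm L d \<kappa> \<Theta> * (1/3) ^ n"
      by (rule pot_norm_dyson_term_le_geometric[OF \<Psi> \<kappa>' small])
    finally show ?thesis .
  qed
  have "summable (\<lambda>n. pot_norm L d \<kappa> \<Theta> * (1/3::real) ^ n)" by (intro summable_mult summable_geometric) simp
  then have "summable (\<lambda>n. \<i> ^ n * dyson_term L d \<Psi> \<Theta> n t Z \<sigma> \<tau>)"
    using bound by (rule summable_comparison_test')
  then show ?thesis unfolding evol_def by (simp add: summable_sums)
qed

lemma pot_norm_evol_diff_le:
  assumes \<Phi>: "bounded_measurable_tpot L d t \<Phi>" "bounded_measurable_tpot L d t \<Phi>'" "0 \<le> t"
    and \<kappa>': "0 \<le> \<kappa>'" "\<kappa>' < \<kappa>"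
    and small: "12 * integral {0..t} (\<lambda>s. pot_norm L d \<kappa> (\<Phi> s)) \<le> \<kappa> - \<kappa>'"
      "12 * integral {0..t} (\<lambda>s. pot_norm L d \<kappa> (\<Phi>' s)) \<le> \<kappa> - \<kappa>'"
  shows "pot_norm L d \<kappa>' (evol L d \<Phi> t \<Theta> - evol L d \<Phi>' t \<Theta>)
    \<le> 36 * exp (- \<kappa>') / (\<kappa> - \<kappa>') * pot_norm L d \<kappa> \<Theta> * integral {0..t} (\<lambda>s. pot_norm L d \<kappa> (\<Phi> s - \<Phi>' s))"
proof -
  define Q where "Q n = (\<lambda>Z \<sigma> \<tau>. \<i> ^ n * (dyson_term L d \<Phi> \<Theta> n t - dyson_term L d \<Phi>' \<Theta> n t) Z \<sigma> \<tau>)" for n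
  define B where "B = 4 * exp (- \<kappa>') / (\<kappa> - \<kappa>') * pot_norm L d \<kappa> \<Theta>
      * integral {0..t} (\<lambda>s. pot_norm L d \<kappa> (\<Phi> s - \<Phi>' s))"
  have sums: "(\<lambda>n. Q n Z \<sigma> \<tau>) sums (evol L d \<Phi> t \<Theta> - evol L d \<Phi>' t \<Theta>) Z \<sigma> \<tau>"
    if "Z \<subseteq> L" "Z \<noteq> {}" "\<sigma> \<in> confs L d" "\<tau> \<in> confs L d" for Z \<sigma> \<tau>
    using sums_diff[OF dyson_series_sums[OF \<Phi>(1,3) \<kappa>' small(1) that] dyson_series_sums[OF \<Phi>(2,3) \<kappa>' small(2) that]]
    unfolding Q_def by (simp add: right_diff_distrib)
  have Q_Suc: "pot_norm L d \<kappa>' (Q (Suc k)) \<le> B * (real (Suc k) * (2/3) ^ k)" for k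
  proof -
    have "pot_norm L d \<kappa>' (Q (Suc k))
        \<le> cmod (\<i> ^ Suc k) * pot_norm L d \<kappa>' (dyson_term L d \<Phi> \<Theta> (Suc k) t - dyson_term L d \<Phi>' \<Theta> (Suc k) t)"
      unfolding Q_def by (rule pot_norm_scale_le)
    also have "\<dots> \<le> B * (real (Suc k) * (2/3) ^ k)"
      using pot_norm_dyson_term_diff_le_geometric[OF \<Phi> \<kappa>'] small unfolding B_def by (simp add: norm_mult norm_power del: dyson_term.simps)
    finally show ?thesis .
  qed
  have "(\<lambda>k. B * (real (Suc k) * (2/3) ^ k)) sums (B * (1 / (1 - 2/3) ^ 2))"
    by (intro sums_mult geometric_deriv_sums) simp
  then have geo: "(\<lambda>k. B * (real (Suc k) * (2/3) ^ k)) sums (9 * B)" by (simp add: power2_eq_square mult.commute)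
  have summable: "summable (\<lambda>k. pot_norm L d \<kappa>' (Q (Suc k)))"
    using sums_summable[OF geo] by (rule summable_comparison_test') (use Q_Suc pot_norm_nonneg in simp)
  have "pot_norm L d \<kappa>' (evol L d \<Phi> t \<Theta> - evol L d \<Phi>' t \<Theta>) \<le> (\<Sum>n. pot_norm L d \<kappa>' (Q n))"
    by (intro pot_norm_le_suminf sums summable_Suc_iff[THEN iffD1, OF summable])
  also have "\<dots> = (\<Sum>k. pot_norm L d \<kappa>' (Q (Suc k)))"
  proof -
    have "pot_norm L d \<kappa>' (Q 0) = 0" unfolding Q_def by (simp add: pot_norm_zero)
    then show ?thesis
      using suminf_split_head[OF summable_Suc_iff[THEN iffD1, OF summable]] by simp
  qed
  also have "\<dots> \<le> (\<Sum>k. B * (real (Suc k) * (2/3) ^ k))"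
    by (intro suminf_le Q_Suc summable sums_summable[OF geo])
  also have "\<dots> = 9 * B" using geo by (rule sums_unique[symmetric])
  finally show ?thesis by (simp add: B_def)
qed

end

lemma gap_constant_le:
  fixes \<kappa> \<kappa>' C :: real
  assumes "0 < \<kappa>'" "\<kappa>' < \<kappa>" "1 \<le> C"
  shows "36 * exp (- \<kappa>') / (\<kappa> - \<kappa>') \<le> C ^ 3 * (72 / (\<kappa>' * (\<kappa> - \<kappa>')))"
proof -
  have "\<kappa>' \<le> exp \<kappa>'" using exp_ge_add_one_self[of \<kappa>'] by linarith
  then have "\<kappa>' * exp (- \<kappa>') \<le> 1" by (simp add: exp_minus field_simps)
  then have "36 * (\<kappa>' * exp (- \<kappa>')) / (\<kappa>' * (\<kappa> - \<kappa>')) \<le> 72 / (\<kappa>' * (\<kappa> - \<kappa>'))"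
    using assms by (intro divide_right_mono) auto
  also have "\<dots> \<le> C ^ 3 * (72 / (\<kappa>' * (\<kappa> - \<kappa>')))"
    using mult_right_mono[OF one_le_power[OF assms(3), of 3], of "72 / (\<kappa>' * (\<kappa> - \<kappa>'))"] assms by simp
  finally show ?thesis using assms by simp
qed

theorem lemma7:
  fixes L :: "'a set" and d :: "'a \<Rightarrow> nat"
    and \<Phi> \<Phi>' :: "real \<Rightarrow> 'a pot" and \<Theta> :: "'a pot"
    and t \<kappa> \<kappa>' lam M C :: real
  assumes "finite L" and "\<forall>x\<in>L. 1 \<le> d x"
    and "0 < t"
    and "regular_tpot L d t \<Phi>" and "regular_tpot L d t \<Phi>'"
    and "is_potential L d \<Theta>"
    and "0 < \<kappa>'" and "\<kappa>' < \<kappa>"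
    and "lam = max (tpot_norm L d \<kappa> t \<Phi>) (tpot_norm L d \<kappa> t \<Phi>')"
    and "12 * lam * t \<le> \<kappa> - \<kappa>'"
    and "M = 72 / (\<kappa>' * (\<kappa> - \<kappa>'))"
    and "C = 1 + M * lam * t"
  shows "pot_norm L d \<kappa>' (evol L d \<Phi> t \<Theta> - evol L d \<Phi>' t \<Theta>)
           \<le> C ^ 3 * M * t * pot_norm L d \<kappa> \<Theta> * tpot_norm L d \<kappa> t (\<lambda>s. \<Phi> s - \<Phi>' s)"
proof -
  interpret finite_sites L d using assms(1) by (rule finite_sites.intro)
  have \<Phi>: "bounded_measurable_tpot L d t \<Phi>" "bounded_measurable_tpot L d t \<Phi>'"
    using assms(4,5) by (simp_all add: regular_tpot_imp_bounded_measurable_tpot)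
  define I where "I \<Psi> = integral {0..t} (\<lambda>s. pot_norm L d \<kappa> (\<Psi> s))" for \<Psi> :: "real \<Rightarrow> 'a pot"
  have I_nonneg: "0 \<le> I \<Psi>" if "bounded_measurable_tpot L d t \<Psi>" for \<Psi>
    unfolding I_def using that
    by (intro integral_nonneg_bounded_measurable bounded_measurable_pot_norm) (auto simp: pot_norm_nonneg)
  have "I \<Phi> / t \<le> lam" "I \<Phi>' / t \<le> lam" using assms(9) by (simp_all add: tpot_norm_def I_def)
  then have "I \<Phi> \<le> lam * t" "I \<Phi>' \<le> lam * t" and lam: "0 \<le> lam"
    using assms(3) I_nonneg[OF \<Phi>(1)] by (simp_all add: pos_divide_le_eq order_trans[OF divide_nonneg_pos])
  then have "pot_norm L d \<kappa>' (evol L d \<Phi> t \<Theta> - evol L d \<Phi>' t \<Theta>)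
      \<le> 36 * exp (- \<kappa>') / (\<kappa> - \<kappa>') * pot_norm L d \<kappa> \<Theta> * I (\<lambda>s. \<Phi> s - \<Phi>' s)"
    using assms(3,7,8,10) unfolding I_def by (intro pot_norm_evol_diff_le[OF \<Phi>]) auto
  also have "\<dots> \<le> C ^ 3 * M * pot_norm L d \<kappa> \<Theta> * I (\<lambda>s. \<Phi> s - \<Phi>' s)"
    using gap_constant_le[OF assms(7,8), of C] lam assms(3,7,8,11,12)
    by (intro mult_right_mono) (auto simp: pot_norm_nonneg I_nonneg bounded_measurable_tpot_diff[OF \<Phi>])
  finally show ?thesis using assms(3) by (simp add: tpot_norm_def I_def)
qed

end
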